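(* Let $\mathcal{Z}$ be a set and $\{W^z\}_{z\in\mathcal{Z}}$ a family of $d\times d$ positive semidefinite matrices with $\|W^z\|_F\le1$ for all $z$. Let $C\in(1,2]$ and $\gamma\in(0,1)$ with $\gamma C<5/2$. Suppose the subroutines $\mathtt{LinOpt}$ and $\mathtt{LinEst}$ satisfy the approximation assumption below with $\varepsilon_{\mathrm{LinOpt}}=C\gamma/5$ and $\varepsilon_{\mathrm{LinEst}}=C\gamma^2/10$, for some subsets $\mathcal{Z}_{\mathrm{ref}},\mathcal{Z}_{\mathrm{supp}}\subseteq\mathcal{Z}$. Then FW-OptDesign run with parameters $C,\gamma$ terminates after at most $t\le\lceil 16\gamma^{-2}C^{-2}d^{-1}\ln(1+1/\gamma)\rceil$ iterations (using at most twice that many calls to each of $\mathtt{LinOpt}$ and $\mathtt{LinEst}$), and its output $P_t$ satisfies $P_t\in\Delta(\mathcal{Z}_{\mathrm{supp}})$, $|\mathrm{supp}(P_t)|\le t$, and $$\sup_{z\in\mathcal{Z}_{\mathrm{ref}}}\mathrm{Tr}(M_{P_t}^{-1}W^z)\le(1+3C/2)\,d,\qquad M_{P_t}:=\gamma I_d+\mathbb{E}_{z\sim P_t}[W^z].$$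
   Context: Approximation assumption: $\mathtt{LinOpt}$ maps $d\times d$ matrices to elements of $\mathcal{Z}_{\mathrm{supp}}$, and $\mathtt{LinEst}$ maps finitely supported distributions on $\mathcal{Z}_{\mathrm{supp}}$ to $d\times d$ positive semidefinite matrices, such that for every nonzero positive semidefinite $M$ and every finitely supported $P\in\Delta(\mathcal{Z}_{\mathrm{supp}})$, the outputs $\hat z_M=\mathtt{LinOpt}(M/\|M\|_F)$ and $\widehat W_P=\mathtt{LinEst}(P)$ satisfy $\sup_{z\in\mathcal{Z}_{\mathrm{ref}}}\mathrm{Tr}(MW^z)\le\mathrm{Tr}(MW^{\hat z_M})+\varepsilon_{\mathrm{LinOpt}}\|M\|_F$ and $\|\widehat W_P-\mathbb{E}_{z\sim P}[W^z]\|_{\mathrm{op}}\le\varepsilon_{\mathrm{LinEst}}$. Algorithm FW-OptDesign($\mathtt{LinOpt},\mathtt{LinEst},C,\gamma$): set $\mu=C\gamma^2d/8$, $z_1=\mathtt{LinOpt}(I_d)$, $P_1=\delta_{z_1}$ (point mass). For $t=1,2,\dots$: set $M_t=\gamma I_d+\mathtt{LinEst}(P_t)$; set $\tilde z_t=\mathtt{LinOpt}(M_t^{-1}/\|M_t^{-1}\|_F)$; set $W_t=\mathtt{LinEst}(\delta_{\tilde z_t})$; if $\mathrm{Tr}(M_t^{-1}W_t)\le(1+C)d$, return $P_t$; otherwise set $P_{t+1}=P_t+\mu(\delta_{\tilde z_t}-P_t)$ (i.e. $(1-\mu)P_t+\mu\delta_{\tilde z_t}$) and continue. $\|\cdot\|_F$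 and $\|\cdot\|_{\mathrm{op}}$ denote Frobenius and operator norms. *)

theory Defs
  imports "HOL-Analysis.Analysis"
begin

text \<open>d x d real matrices are modelled as real^'n^'n with d = CARD('n).
  The norm on real^'n^'n is the Frobenius norm; the operator norm is the
  onorm of the induced linear map.\<close>

definition psd :: "real^'n^'n \<Rightarrow> bool" where
  "psd A \<longleftrightarrow> transpose A = A \<and> (\<forall>x. 0 \<le> x \<bullet> (A *v x))"

definition op_norm :: "real^'n^'n \<Rightarrow> real" where
  "op_norm A = onorm (\<lambda>x. A *v x)"

definition fsupp :: "('z \<Rightarrow> real) \<Rightarrow> 'z set" where
  "fsupp P = {z. P z \<noteq> 0}"

definition is_fdist :: "('z \<Rightarrow> real) \<Rightarrow> 'z set \<Rightarrow> bool" where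
  "is_fdist P S \<longleftrightarrow> finite (fsupp P) \<and> (\<forall>z. 0 \<le> P z) \<and> fsupp P \<subseteq> S
      \<and> sum P (fsupp P) = 1"

definition delta :: "'z \<Rightarrow> ('z \<Rightarrow> real)" where
  "delta z = (\<lambda>y. if y = z then 1 else 0)"

definition expW :: "('z \<Rightarrow> real^'n^'n) \<Rightarrow> ('z \<Rightarrow> real) \<Rightarrow> real^'n^'n" where
  "expW W P = (\<Sum>z\<in>fsupp P. P z *\<^sub>R W z)"

definition approx_assumption ::
  "('z \<Rightarrow> real^'n^'n) \<Rightarrow> (real^'n^'n \<Rightarrow> 'z) \<Rightarrow> (('z \<Rightarrow> real) \<Rightarrow> real^'n^'n)
   \<Rightarrow> 'z set \<Rightarrow> 'z set \<Rightarrow> real \<Rightarrow> real \<Rightarrow> bool" where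
  "approx_assumption W LinOpt LinEst Zref Zsupp epsOpt epsEst \<longleftrightarrow>
     (\<forall>M. LinOpt M \<in> Zsupp) \<and>
     (\<forall>P. is_fdist P Zsupp \<longrightarrow> psd (LinEst P)) \<and>
     (\<forall>M. psd M \<and> M \<noteq> 0 \<longrightarrow>
        (\<forall>z\<in>Zref. trace (M ** W z)
           \<le> trace (M ** W (LinOpt ((1 / norm M) *\<^sub>R M))) + epsOpt * norm M)) \<and>
     (\<forall>P. is_fdist P Zsupp \<longrightarrow> op_norm (LinEst P - expW W P) \<le> epsEst)"

text \<open>FW-OptDesign.  fw_M t = M_t, fw_zt t = tilde z_t, fw_stop t = stopping test
  at iteration t, fw_P t = P_t, for t \<ge> 1 (index 0 is a dummy equal to P_1).\<close>

definition fw_M :: "(('z \<Rightarrow> real) \<Rightarrow> real^'n^'n) \<Rightarrow> real \<Rightarrow> ('z \<Rightarrow> real) \<Rightarrow> real^'n^'n" where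
  "fw_M LinEst \<gamma> P = \<gamma> *\<^sub>R mat 1 + LinEst P"

definition fw_zt :: "(real^'n^'n \<Rightarrow> 'z) \<Rightarrow> (('z \<Rightarrow> real) \<Rightarrow> real^'n^'n) \<Rightarrow> real
    \<Rightarrow> ('z \<Rightarrow> real) \<Rightarrow> 'z" where
  "fw_zt LinOpt LinEst \<gamma> P =
     (let Mi = matrix_inv (fw_M LinEst \<gamma> P) in LinOpt ((1 / norm Mi) *\<^sub>R Mi))"

fun fw_P :: "(real^'n^'n \<Rightarrow> 'z) \<Rightarrow> (('z \<Rightarrow> real) \<Rightarrow> real^'n^'n) \<Rightarrow> real \<Rightarrow> real
    \<Rightarrow> nat \<Rightarrow> ('z \<Rightarrow> real)" where
  "fw_P LinOpt LinEst C \<gamma> 0 = delta (LinOpt (mat 1))"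
| "fw_P LinOpt LinEst C \<gamma> (Suc 0) = delta (LinOpt (mat 1))"
| "fw_P LinOpt LinEst C \<gamma> (Suc (Suc t)) =
     (let P = fw_P LinOpt LinEst C \<gamma> (Suc t);
          \<mu> = C * \<gamma>^2 * real CARD('n) / 8
      in (\<lambda>z. (1 - \<mu>) * P z + \<mu> * delta (fw_zt LinOpt LinEst \<gamma> P) z))"

definition fw_stop :: "(real^'n^'n \<Rightarrow> 'z) \<Rightarrow> (('z \<Rightarrow> real) \<Rightarrow> real^'n^'n) \<Rightarrow> real \<Rightarrow> real
    \<Rightarrow> nat \<Rightarrow> bool" where
  "fw_stop LinOpt LinEst C \<gamma> t =
     (let P = fw_P LinOpt LinEst C \<gamma> t;
          Wt = LinEst (delta (fw_zt LinOpt LinEst \<gamma> P))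
      in trace (matrix_inv (fw_M LinEst \<gamma> P) ** Wt) \<le> (1 + C) * real CARD('n))"

end

theory Submission
  imports Defs
begin

text \<open>Track the potential \<open>\<Phi>(P) = ln det (\<gamma> I + E\<^sub>P W)\<close>.  Since \<open>0 \<le> E\<^sub>P W\<close> and
  \<open>\<parallel>E\<^sub>P W\<parallel>\<^sub>F \<le> 1\<close>, every generalized eigenvalue of \<open>E\<^sub>P W\<close> relative to \<open>\<gamma> I\<close> lies in
  \<open>[0, 1/\<gamma>]\<close>, so \<open>\<Phi>\<close> ranges over an interval of length \<open>d ln (1 + 1/\<gamma>)\<close>.
  If the stopping test fails, then along the Frank--Wolfe direction \<open>W\<^sup>z - E\<^sub>P W\<close> the
  first-order term \<open>Tr ((\<gamma> I + E\<^sub>P W)\<^sup>-\<^sup>1 (W\<^sup>z - E\<^sub>P W))\<close> of \<open>\<Phi>\<close> exceeds \<open>3Cd/4\<close>,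
  while the second-order term is at most \<open>2/\<gamma>\<^sup>2\<close>; with \<open>ln (1 + x) \<ge> x - x\<^sup>2\<close> and step size \<open>\<mu> = C\<gamma>\<^sup>2d/8\<close> the potential rises by
  at least \<open>C\<^sup>2\<gamma>\<^sup>2d\<^sup>2/16\<close>, which bounds the number of iterations.  When the test passes,
  the approximate optimality of the linear oracle transfers the test from the chosen point to
  every reference point, losing only the estimation errors.\<close>

section \<open>Quadratic forms\<close>

lemma symmetric_inner_commute:
  fixes A :: "real^'n^'n"
  assumes "transpose A = A"
  shows "x \<bullet> (A *v y) = y \<bullet> (A *v x)"
proof -
  have "x \<bullet> (A *v y) = (x v* A) \<bullet> y" by (simp add: dot_lmul_matrix)
  also have "x v* A = transpose A *v x" by simp
  finally show ?thesis using assms by (simp add: inner_commute)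
qed

lemma quad_form_add: "x \<bullet> ((A + B) *v x) = x \<bullet> (A *v x) + x \<bullet> (B *v x)"
  for A B :: "real^'n^'n"
  by (simp add: matrix_vector_mult_add_rdistrib inner_add_right)

lemma quad_form_diff: "x \<bullet> ((A - B) *v x) = x \<bullet> (A *v x) - x \<bullet> (B *v x)"
  for A B :: "real^'n^'n"
  by (simp add: matrix_vector_mult_diff_rdistrib inner_diff_right)

lemma quad_form_scaleR: "x \<bullet> ((k *\<^sub>R A) *v x) = k * (x \<bullet> (A *v x))"
  for A :: "real^'n^'n"
  by (simp add: scaleR_matrix_vector_assoc[symmetric])

lemma quad_form_scaled_id: "x \<bullet> ((k *\<^sub>R mat 1 :: real^'n^'n) *v x) = k * (x \<bullet> x)"
  by (simp add: quad_form_scaleR)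

lemma quad_form_add_scaled:
  fixes A :: "real^'n^'n"
  assumes "transpose A = A"
  shows "(v + t *\<^sub>R w) \<bullet> (A *v (v + t *\<^sub>R w))
       = v \<bullet> (A *v v) + 2 * t * (w \<bullet> (A *v v)) + t\<^sup>2 * (w \<bullet> (A *v w))"
  using symmetric_inner_commute[OF assms, of v w]
  by (simp add: matrix_vector_right_distrib matrix_vector_mult_scaleR inner_add_left
      inner_add_right power2_eq_square algebra_simps)

lemma congruence_entry:
  fixes Q B :: "real^'n^'n"
  shows "(transpose Q ** B ** Q) $ i $ j = column i Q \<bullet> (B *v column j Q)"
  unfolding matrix_matrix_mult_def matrix_vector_mult_def transpose_def column_def inner_vec_def
  by (simp add: sum_distrib_left sum_distrib_right mult_ac) (subst sum.swap, simp add: mult_ac)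

lemma transpose_add: "transpose (A + B) = transpose A + transpose B"
  for A B :: "real^'n^'m"
  by (simp add: transpose_def vec_eq_iff)

lemma transpose_diff: "transpose (A - B) = transpose A - transpose B"
  for A B :: "real^'n^'m"
  by (simp add: transpose_def vec_eq_iff)

lemma transpose_sum: "transpose (sum f S) = (\<Sum>z\<in>S. transpose (f z))"
  for f :: "'a \<Rightarrow> real^'n^'m"
  by (induction S rule: infinite_finite_induct) (simp_all add: transpose_def vec_eq_iff)

lemma matrix_mult_diff_right: "(Y - X) ** V = Y ** V - X ** V"
  for X Y V :: "real^'n^'n"
  by (simp add: matrix_matrix_mult_def vec_eq_iff algebra_simps sum_subtractf)

lemma matrix_mult_diff_left: "V ** (Y - X) = V ** Y - V ** X"
  for X Y V :: "real^'n^'n"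
  by (simp add: matrix_matrix_mult_def vec_eq_iff algebra_simps sum_subtractf)

lemma matrix_mult_add_right: "(Y + X) ** V = Y ** V + X ** V"
  for X Y V :: "real^'n^'n"
  by (simp add: matrix_matrix_mult_def vec_eq_iff algebra_simps sum.distrib)

lemma psd_shift:
  fixes X :: "real^'n^'n"
  assumes "psd X"
  shows "transpose (g *\<^sub>R mat 1 + X) = g *\<^sub>R mat 1 + X"
    and "g * (x \<bullet> x) \<le> x \<bullet> ((g *\<^sub>R mat 1 + X) *v x)"
  using assms by (simp_all add: psd_def transpose_add transpose_scalar quad_form_add
      quad_form_scaled_id)

lemma quad_form_nonneg_if_bounded_below:
  fixes A :: "real^'n^'n"
  assumes "0 < c" "c * (x \<bullet> x) \<le> x \<bullet> (A *v x)"
  shows "0 \<le> x \<bullet> (A *v x)"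
  using assms by (smt (verit) inner_ge_zero mult_nonneg_nonneg)

lemma quad_form_op_norm:
  fixes E :: "real^'n^'n"
  shows "\<bar>x \<bullet> (E *v x)\<bar> \<le> op_norm E * (x \<bullet> x)"
proof -
  have "\<bar>x \<bullet> (E *v x)\<bar> \<le> norm x * norm (E *v x)" by (rule Cauchy_Schwarz_ineq2)
  also have "\<dots> \<le> norm x * (op_norm E * norm x)"
    unfolding op_norm_def by (intro mult_left_mono onorm) simp_all
  also have "\<dots> = op_norm E * (x \<bullet> x)"
    by (simp add: power2_norm_eq_inner[symmetric] power2_eq_square)
  finally show ?thesis .
qed

lemma linear_le_quadratic_imp_zero:
  fixes a K :: real
  assumes "\<And>t. 2 * t * a \<le> t\<^sup>2 * K"
  shows "a = 0"
proof (rule ccontr)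
  assume "a \<noteq> 0"
  define s where "s = 1 / (\<bar>K\<bar> + 1)"
  have s: "s > 0" "s * K < 1"
    using abs_ge_self[of K] by (auto simp: s_def field_simps)
  have "(s * a\<^sup>2) * 2 \<le> (s * a\<^sup>2) * (s * K)"
    using assms[of "s * a"] by (simp add: power2_eq_square mult_ac)
  moreover have "s * a\<^sup>2 > 0" using s \<open>a \<noteq> 0\<close> by simp
  ultimately have "2 \<le> s * K" by (metis mult_le_cancel_left_pos)
  with s show False by simp
qed

section \<open>Matrix inverses\<close>

lemma matrix_inv_cancel:
  fixes A :: "real^'n^'n"
  assumes "invertible A"
  shows "A ** matrix_inv A = mat 1" "matrix_inv A ** A = mat 1"
proof -
  have "\<exists>A'. A ** A' = mat 1 \<and> A' ** A = mat 1" using assms unfolding invertible_def .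
  hence "A ** matrix_inv A = mat 1 \<and> matrix_inv A ** A = mat 1"
    unfolding matrix_inv_def by (rule someI_ex)
  thus "A ** matrix_inv A = mat 1" "matrix_inv A ** A = mat 1" by auto
qed

lemma left_inverse_is_matrix_inv:
  fixes A B :: "real^'n^'n"
  assumes "B ** A = mat 1"
  shows "invertible A" "matrix_inv A = B"
proof -
  have AB: "A ** B = mat 1" using matrix_left_right_inverse assms by metis
  show inv: "invertible A" unfolding invertible_def using AB assms by blast
  have "matrix_inv A = matrix_inv A ** (A ** B)" by (simp add: AB)
  also have "\<dots> = B" using matrix_inv_cancel(2)[OF inv] by (simp add: matrix_mul_assoc)
  finally show "matrix_inv A = B" .
qed

lemma matrix_inv_mat_1: "matrix_inv (mat 1 :: real^'n^'n) = mat 1"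
  using left_inverse_is_matrix_inv[of "mat 1" "mat 1"] by simp

lemma matrix_inv_scaleR:
  fixes A :: "real^'n^'n"
  assumes "invertible A" "k \<noteq> 0"
  shows "invertible (k *\<^sub>R A)" "matrix_inv (k *\<^sub>R A) = (1/k) *\<^sub>R matrix_inv A"
proof -
  have "((1/k) *\<^sub>R matrix_inv A) ** (k *\<^sub>R A) = mat 1"
    using matrix_inv_cancel(2)[OF assms(1)] assms(2)
    by (simp add: matrix_scalar_ac scalar_matrix_assoc[symmetric])
  thus "invertible (k *\<^sub>R A)" "matrix_inv (k *\<^sub>R A) = (1/k) *\<^sub>R matrix_inv A"
    by (rule left_inverse_is_matrix_inv)+
qed

lemma matrix_inv_scaled_id:
  assumes "k \<noteq> 0"
  shows "invertible (k *\<^sub>R mat 1 :: real^'n^'n)"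
    "matrix_inv (k *\<^sub>R mat 1 :: real^'n^'n) = (1/k) *\<^sub>R mat 1"
  using matrix_inv_scaleR[of "mat 1", OF _ assms] left_inverse_is_matrix_inv(1)[of "mat 1" "mat 1"]
  by (simp_all add: matrix_inv_mat_1)

lemma transpose_matrix_inv:
  fixes A :: "real^'n^'n"
  assumes "transpose A = A" "invertible A"
  shows "transpose (matrix_inv A) = matrix_inv A"
proof -
  have "transpose (matrix_inv A) ** A = mat 1"
    using matrix_inv_cancel(1)[OF assms(2)] matrix_transpose_mul[of A "matrix_inv A"] assms(1) by simp
  thus ?thesis using left_inverse_is_matrix_inv(2) by metis
qed

lemma matrix_inv_mult_vector:
  fixes A :: "real^'n^'n"
  assumes "invertible A"
  shows "A *v (matrix_inv A *v x) = x" "matrix_inv A *v (A *v x) = x"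
  using matrix_inv_cancel[OF assms] by (simp_all add: matrix_vector_mul_assoc)

lemma psd_matrix_inv:
  fixes A :: "real^'n^'n"
  assumes "psd A" "invertible A"
  shows "psd (matrix_inv A)"
proof -
  have "x \<bullet> (matrix_inv A *v x) = (matrix_inv A *v x) \<bullet> (A *v (matrix_inv A *v x))" for x
    using matrix_inv_mult_vector[OF assms(2)] by (simp add: inner_commute)
  moreover have "transpose (matrix_inv A) = matrix_inv A"
    using assms by (intro transpose_matrix_inv) (auto simp: psd_def)
  ultimately show ?thesis using assms by (simp add: psd_def)
qed

lemma quad_form_matrix_inv_antimono:
  fixes A B :: "real^'n^'n"
  assumes sA: "transpose A = A" and iA: "invertible A" and iB: "invertible B"
    and Ann: "\<And>x. 0 \<le> x \<bullet> (A *v x)"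
    and AB: "\<And>x. x \<bullet> (A *v x) \<le> x \<bullet> (B *v x)"
  shows "x \<bullet> (matrix_inv B *v x) \<le> x \<bullet> (matrix_inv A *v x)"
proof -
  define y where "y = matrix_inv B *v x"
  define u where "u = matrix_inv A *v x"
  have Au: "A *v u = x" and By: "B *v y = x"
    unfolding u_def y_def by (simp_all add: matrix_inv_mult_vector iA iB)
  have "0 \<le> (y - u) \<bullet> (A *v (y - u))" by (rule Ann)
  also have "\<dots> = y \<bullet> (A *v y) - 2 * (y \<bullet> (A *v u)) + u \<bullet> (A *v u)"
    using symmetric_inner_commute[OF sA, of u y]
    by (simp add: matrix_vector_mult_diff_distrib inner_diff_left inner_diff_right algebra_simps)
  also have "\<dots> \<le> y \<bullet> (B *v y) - 2 * (y \<bullet> (A *v u)) + u \<bullet> (A *v u)" using AB[of y] by simp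
  also have "\<dots> = u \<bullet> x - y \<bullet> x" using Au By by simp
  finally show ?thesis unfolding y_def u_def by (simp add: inner_commute)
qed

lemma quad_form_matrix_inv_le_scaled:
  fixes A B :: "real^'n^'n"
  assumes sB: "transpose B = B" and iA: "invertible A" and iB: "invertible B"
    and Bnn: "\<And>x. 0 \<le> x \<bullet> (B *v x)" and k: "k > 0"
    and BA: "\<And>x. x \<bullet> (B *v x) \<le> k * (x \<bullet> (A *v x))"
  shows "x \<bullet> (matrix_inv A *v x) \<le> k * (x \<bullet> (matrix_inv B *v x))"
proof -
  note kA = matrix_inv_scaleR[OF iA, of k]
  have "x \<bullet> (matrix_inv (k *\<^sub>R A) *v x) \<le> x \<bullet> (matrix_inv B *v x)"
    by (rule quad_form_matrix_inv_antimono[OF sB iB _ Bnn])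
      (use kA k BA in \<open>simp_all add: quad_form_scaleR\<close>)
  thus ?thesis using k kA by (simp add: quad_form_scaleR field_simps)
qed

lemma matrix_inv_nonzero:
  fixes A :: "real^'n^'n"
  assumes "invertible A"
  shows "matrix_inv A \<noteq> 0"
proof
  assume "matrix_inv A = 0"
  hence "(mat 1 :: real^'n^'n) $ undefined $ undefined = 0"
    using matrix_inv_cancel(2)[OF assms] by (metis times0_left zero_index)
  thus False by (simp add: mat_def)
qed

section \<open>Simultaneous diagonalisation\<close>

definition diag_mat :: "('n \<Rightarrow> real) \<Rightarrow> real^'n^'n" where
  "diag_mat s = (\<chi> i j. if i = j then s i else 0)"

text \<open>The \<open>A\<close>-orthonormal basis diagonalising \<open>D\<close> is built one vector at a time, each
  maximising \<open>y \<bullet> D y\<close> on the \<open>A\<close>-unit sphere of the \<open>A\<close>-orthogonal complement of the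
  vectors chosen so far.\<close>

lemma exists_nonzero_A_orthogonal:
  fixes A :: "real^'n^'n" and q :: "'n \<Rightarrow> real^'n"
  assumes "a \<notin> K"
  obtains x where "x \<noteq> 0" "\<forall>i\<in>K. x \<bullet> (A *v q i) = 0"
proof -
  define S where "S = (\<lambda>i. A *v q i) ` K"
  have "card K < CARD('n)" using assms by (intro psubset_card_mono) auto
  moreover have "dim S \<le> card K"
    unfolding S_def by (meson card_image_le dim_le_card' finite finite_imageI le_trans)
  ultimately have "dim S < DIM(real^'n)" by simp
  then obtain x :: "real^'n" where "x \<noteq> 0" and xS: "\<And>y. y \<in> span S \<Longrightarrow> orthogonal x y"
    using orthogonal_to_subspace_exists by blast
  moreover have "\<forall>i\<in>K. x \<bullet> (A *v q i) = 0"
    using xS unfolding S_def orthogonal_def by (blast intro: span_base)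
  ultimately show ?thesis using that by blast
qed

lemma rayleigh_max_exists:
  fixes A D :: "real^'n^'n" and q :: "'n \<Rightarrow> real^'n"
  assumes c: "c > 0" and Apos: "\<And>x. c * (x \<bullet> x) \<le> x \<bullet> (A *v x)"
    and x0: "x \<noteq> 0" and xK: "\<forall>i\<in>K. x \<bullet> (A *v q i) = 0"
  obtains v where "\<forall>i\<in>K. v \<bullet> (A *v q i) = 0" "v \<bullet> (A *v v) = 1"
    "\<And>y. \<forall>i\<in>K. y \<bullet> (A *v q i) = 0 \<Longrightarrow> y \<bullet> (A *v y) = 1 \<Longrightarrow> y \<bullet> (D *v y) \<le> v \<bullet> (D *v v)"
proof -
  define T where "T = (\<Inter>i\<in>K. {y. y \<bullet> (A *v q i) = 0}) \<inter> {y. y \<bullet> (A *v y) = 1}"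
  have xAx: "x \<bullet> (A *v x) > 0"
    using Apos[of x] c x0 by (smt (verit) inner_gt_zero_iff mult_pos_pos)
  have "(1 / sqrt (x \<bullet> (A *v x))) *\<^sub>R x \<in> T"
    using xK xAx unfolding T_def
    by (auto simp: matrix_vector_mult_scaleR real_sqrt_mult[symmetric] power2_eq_square[symmetric])
  hence "T \<noteq> {}" by auto
  have "closed T" unfolding T_def
    by (intro closed_Int closed_INT ballI closed_Collect_eq continuous_intros linear_continuous_on) auto
  moreover have "bounded T"
  proof -
    have "norm y \<le> sqrt (1 / c)" if "y \<in> T" for y
    proof -
      have "c * (y \<bullet> y) \<le> 1" using Apos[of y] that unfolding T_def by auto
      hence "y \<bullet> y \<le> 1 / c" using c by (simp add: field_simps)
      thus ?thesis by (simp add: norm_eq_sqrt_inner)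
    qed
    thus ?thesis unfolding bounded_iff by blast
  qed
  ultimately have "compact T" by (simp add: compact_eq_bounded_closed)
  moreover have "continuous_on T (\<lambda>y. y \<bullet> (D *v y))"
    by (intro continuous_intros linear_continuous_on) auto
  ultimately obtain v where "v \<in> T" "\<And>y. y \<in> T \<Longrightarrow> y \<bullet> (D *v y) \<le> v \<bullet> (D *v v)"
    using continuous_attains_sup[OF _ \<open>T \<noteq> {}\<close>] by blast
  thus ?thesis using that unfolding T_def by auto
qed

text \<open>First-order optimality of the constrained maximiser: perturb \<open>v\<close> to \<open>v + t w\<close> and
  renormalise; the resulting inequality is linear in \<open>t\<close> on the left and quadratic on the right.\<close>

lemma rayleigh_max_stationary:
  fixes A D :: "real^'n^'n" and q :: "'n \<Rightarrow> real^'n"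
  assumes sA: "transpose A = A" and sD: "transpose D = D"
    and Ann: "\<And>x. 0 \<le> x \<bullet> (A *v x)"
    and vK: "\<forall>i\<in>K. v \<bullet> (A *v q i) = 0" and vA: "v \<bullet> (A *v v) = 1"
    and vmax: "\<And>y. \<forall>i\<in>K. y \<bullet> (A *v q i) = 0 \<Longrightarrow> y \<bullet> (A *v y) = 1 \<Longrightarrow> y \<bullet> (D *v y) \<le> v \<bullet> (D *v v)"
    and wK: "\<forall>i\<in>K. w \<bullet> (A *v q i) = 0" and wv: "w \<bullet> (A *v v) = 0"
  shows "w \<bullet> (D *v v) = 0"
proof (rule linear_le_quadratic_imp_zero)
  fix t :: real
  define r where "r = v \<bullet> (D *v v)"
  define y where "y = v + t *\<^sub>R w"
  define n where "n = y \<bullet> (A *v y)"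
  have n: "n = 1 + t\<^sup>2 * (w \<bullet> (A *v w))"
    unfolding n_def y_def quad_form_add_scaled[OF sA] using vA wv by simp
  have "n > 0" using n Ann[of w] by (smt (verit) zero_le_power2 mult_nonneg_nonneg)
  have "(1 / sqrt n) *\<^sub>R y \<bullet> (D *v ((1 / sqrt n) *\<^sub>R y)) \<le> r"
    unfolding r_def using vK wK \<open>n > 0\<close>
    by (intro vmax) (auto simp: y_def n_def inner_add_left matrix_vector_mult_scaleR
        real_sqrt_mult[symmetric] power2_eq_square[symmetric])
  hence "y \<bullet> (D *v y) \<le> r * n"
    using \<open>n > 0\<close> by (simp add: matrix_vector_mult_scaleR real_sqrt_mult[symmetric]
        power2_eq_square[symmetric] divide_le_eq)
  moreover have "y \<bullet> (D *v y) = r + 2 * t * (w \<bullet> (D *v v)) + t\<^sup>2 * (w \<bullet> (D *v w))"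
    unfolding y_def quad_form_add_scaled[OF sD] r_def by simp
  ultimately show "2 * t * (w \<bullet> (D *v v)) \<le> t\<^sup>2 * (r * (w \<bullet> (A *v w)) - w \<bullet> (D *v w))"
    unfolding n by (simp add: algebra_simps)
qed

lemma simultaneous_diag_vectors:
  fixes A D :: "real^'n^'n"
  assumes sA: "transpose A = A" and sD: "transpose D = D" and c: "c > 0"
    and Apos: "\<And>x. c * (x \<bullet> x) \<le> x \<bullet> (A *v x)"
  obtains q :: "'n \<Rightarrow> real^'n" where "\<And>i j. q i \<bullet> (A *v q j) = (if i = j then 1 else 0)"
    "\<And>i j. i \<noteq> j \<Longrightarrow> q i \<bullet> (D *v q j) = 0"
proof -
  have Ann: "\<And>x. 0 \<le> x \<bullet> (A *v x)" using quad_form_nonneg_if_bounded_below[OF c Apos] .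
  have "\<exists>q::'n \<Rightarrow> real^'n. (\<forall>i\<in>K. \<forall>j\<in>K. q i \<bullet> (A *v q j) = (if i = j then 1 else 0))
          \<and> (\<forall>i\<in>K. \<forall>j\<in>K. i \<noteq> j \<longrightarrow> q i \<bullet> (D *v q j) = 0)
          \<and> (\<forall>x. (\<forall>i\<in>K. x \<bullet> (A *v q i) = 0) \<longrightarrow> (\<forall>i\<in>K. x \<bullet> (D *v q i) = 0))" for K :: "'n set"
  proof (induction K rule: finite_induct[OF finite])
    case 1
    show ?case by simp
  next
    case (2 a K)
    then obtain q where q1: "\<forall>i\<in>K. \<forall>j\<in>K. q i \<bullet> (A *v q j) = (if i = j then 1 else 0)"
      and q2: "\<forall>i\<in>K. \<forall>j\<in>K. i \<noteq> j \<longrightarrow> q i \<bullet> (D *v q j) = 0"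
      and q3: "\<forall>x. (\<forall>i\<in>K. x \<bullet> (A *v q i) = 0) \<longrightarrow> (\<forall>i\<in>K. x \<bullet> (D *v q i) = 0)"
      by blast
    obtain x where "x \<noteq> 0" "\<forall>i\<in>K. x \<bullet> (A *v q i) = 0"
      using exists_nonzero_A_orthogonal[OF \<open>a \<notin> K\<close>] by blast
    then obtain v where vK: "\<forall>i\<in>K. v \<bullet> (A *v q i) = 0" and vA: "v \<bullet> (A *v v) = 1"
      and vmax: "\<And>y. \<forall>i\<in>K. y \<bullet> (A *v q i) = 0 \<Longrightarrow> y \<bullet> (A *v y) = 1 \<Longrightarrow> y \<bullet> (D *v y) \<le> v \<bullet> (D *v v)"
      using rayleigh_max_exists[OF c Apos] by blast
    have key: "\<forall>w. (\<forall>i\<in>K. w \<bullet> (A *v q i) = 0) \<and> w \<bullet> (A *v v) = 0 \<longrightarrow> w \<bullet> (D *v v) = 0"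
      using rayleigh_max_stationary[OF sA sD Ann vK vA vmax] by blast
    have vD: "\<forall>i\<in>K. v \<bullet> (D *v q i) = 0" using q3 vK by blast
    show ?case
    proof (intro exI[of _ "q(a := v)"] conjI)
      show "\<forall>i\<in>insert a K. \<forall>j\<in>insert a K. (q(a := v)) i \<bullet> (A *v (q(a := v)) j) = (if i = j then 1 else 0)"
        using q1 vK vA \<open>a \<notin> K\<close> symmetric_inner_commute[OF sA] by auto
      show "\<forall>i\<in>insert a K. \<forall>j\<in>insert a K. i \<noteq> j \<longrightarrow> (q(a := v)) i \<bullet> (D *v (q(a := v)) j) = 0"
        using q2 vD \<open>a \<notin> K\<close> symmetric_inner_commute[OF sD] by auto
      show "\<forall>x. (\<forall>i\<in>insert a K. x \<bullet> (A *v (q(a := v)) i) = 0) \<longrightarrow> (\<forall>i\<in>insert a K. x \<bullet> (D *v (q(a := v)) i) = 0)"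
        using q3 key \<open>a \<notin> K\<close> by auto
    qed
  qed
  from this[of UNIV] show ?thesis using that by (metis UNIV_I)
qed

lemma simultaneous_diagonalization:
  fixes A D :: "real^'n^'n"
  assumes sA: "transpose A = A" and sD: "transpose D = D" and c: "c > 0"
    and Apos: "\<And>x. c * (x \<bullet> x) \<le> x \<bullet> (A *v x)"
  obtains Q s where "transpose Q ** A ** Q = mat 1" "transpose Q ** D ** Q = diag_mat s"
    "Q ** transpose Q = matrix_inv A" "invertible A" "det A * (det Q)\<^sup>2 = 1"
    "\<And>i. s i = column i Q \<bullet> (D *v column i Q)"
proof -
  obtain q :: "'n \<Rightarrow> real^'n" where q1: "\<And>i j. q i \<bullet> (A *v q j) = (if i = j then 1 else 0)"
    and q2: "\<And>i j. i \<noteq> j \<Longrightarrow> q i \<bullet> (D *v q j) = 0"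
    using simultaneous_diag_vectors[OF assms] by blast
  define Q :: "real^'n^'n" where "Q = (\<chi> i j. q j $ i)"
  define s where "s = (\<lambda>i. column i Q \<bullet> (D *v column i Q))"
  have col: "column j Q = q j" for j unfolding Q_def column_def by (simp add: vec_eq_iff)
  have Q1: "transpose Q ** A ** Q = mat 1"
    by (auto simp: vec_eq_iff congruence_entry col q1 mat_def)
  have Q2: "transpose Q ** D ** Q = diag_mat s"
    by (auto simp: vec_eq_iff congruence_entry col q2 diag_mat_def s_def)
  have dA: "det A * (det Q)\<^sup>2 = 1"
    using arg_cong[OF Q1, of det] by (simp add: det_mul power2_eq_square mult_ac)
  hence iQ: "invertible Q" by (auto simp: invertible_det_nz)
  have "(Q ** transpose Q) ** A = (Q ** transpose Q ** A) ** (Q ** matrix_inv Q)"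
    using matrix_inv_cancel(1)[OF iQ] by simp
  also have "\<dots> = Q ** (transpose Q ** A ** Q) ** matrix_inv Q" by (simp only: matrix_mul_assoc)
  also have "\<dots> = mat 1" using Q1 matrix_inv_cancel(1)[OF iQ] by simp
  finally have "(Q ** transpose Q) ** A = mat 1" .
  note QQ = left_inverse_is_matrix_inv[OF this]
  show ?thesis by (rule that[OF Q1 Q2 QQ(2)[symmetric] QQ(1) dA]) (simp add: s_def)
qed

lemma posdef_det_pos:
  fixes A :: "real^'n^'n"
  assumes sA: "transpose A = A" and c: "c > 0" and Apos: "\<And>x. c * (x \<bullet> x) \<le> x \<bullet> (A *v x)"
  shows "det A > 0"
proof -
  obtain Q s where "transpose Q ** A ** Q = mat 1" "transpose Q ** A ** Q = diag_mat s"
    "Q ** transpose Q = matrix_inv A" "invertible A" "det A * (det Q)\<^sup>2 = 1"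
    "\<And>i. s i = column i Q \<bullet> (A *v column i Q)"
    using simultaneous_diagonalization[OF sA sA c Apos] by metis
  thus ?thesis using mult_nonpos_nonneg[of "det A" "(det Q)\<^sup>2"] by (cases "det A > 0") auto
qed

lemma posdef_invertible:
  fixes A :: "real^'n^'n"
  assumes "transpose A = A" "c > 0" "\<And>x. c * (x \<bullet> x) \<le> x \<bullet> (A *v x)"
  shows "invertible A"
  using posdef_det_pos[OF assms] by (simp add: invertible_det_nz)

lemma trace_diag_mat: "trace (diag_mat s) = sum s UNIV"
  unfolding trace_def diag_mat_def by simp

lemma sum_if_eq_mult:
  "(\<Sum>k\<in>(UNIV::'n::finite set). (if i = k then a else 0) * (f k :: real)) = a * f i"
proof -
  have "(\<Sum>k\<in>UNIV. (if i = k then a else 0) * f k) = (\<Sum>k\<in>UNIV. if k = i then a * f k else 0)"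
    by (rule sum.cong) auto
  also have "\<dots> = a * f i" by simp
  finally show ?thesis .
qed

lemma diag_mat_sq: "diag_mat s ** diag_mat s = diag_mat (\<lambda>i. (s i)\<^sup>2)"
  by (simp add: diag_mat_def matrix_matrix_mult_def vec_eq_iff power2_eq_square sum_if_eq_mult)

lemma det_diag_mat: "det (diag_mat s) = prod s UNIV"
  by (subst det_diagonal) (auto simp: diag_mat_def)

lemma trace_mult_diag_mat: "trace (B ** diag_mat s) = (\<Sum>i\<in>UNIV. B $ i $ i * s i)"
  unfolding trace_def matrix_matrix_mult_def diag_mat_def
  by (simp add: if_distrib if_distribR cong: if_cong)

lemma trace_congruence:
  fixes Q D B :: "real^'n^'n"
  assumes "Q ** transpose Q = B"
  shows "trace (transpose Q ** D ** Q) = trace (D ** B)"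
    "trace ((transpose Q ** D ** Q) ** (transpose Q ** D ** Q)) = trace (D ** B ** D ** B)"
proof -
  have "trace (transpose Q ** (D ** Q)) = trace ((D ** Q) ** transpose Q)" by (rule trace_mul_sym)
  thus "trace (transpose Q ** D ** Q) = trace (D ** B)"
    unfolding assms[symmetric] by (simp only: matrix_mul_assoc)
  have "trace (transpose Q ** (D ** (Q ** transpose Q) ** D ** Q))
      = trace ((D ** (Q ** transpose Q) ** D ** Q) ** transpose Q)"
    by (rule trace_mul_sym)
  thus "trace ((transpose Q ** D ** Q) ** (transpose Q ** D ** Q)) = trace (D ** B ** D ** B)"
    unfolding assms[symmetric] by (simp only: matrix_mul_assoc)
qed

lemma generalized_eigenvalues:
  fixes A D :: "real^'n^'n"
  assumes sA: "transpose A = A" and sD: "transpose D = D" and c: "c > 0"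
    and Apos: "\<And>x. c * (x \<bullet> x) \<le> x \<bullet> (A *v x)"
  obtains s :: "'n \<Rightarrow> real" where "\<And>\<mu>. det (A + \<mu> *\<^sub>R D) = det A * (\<Prod>i\<in>UNIV. 1 + \<mu> * s i)"
    "sum s UNIV = trace (D ** matrix_inv A)"
    "(\<Sum>i\<in>UNIV. (s i)\<^sup>2) = trace (D ** matrix_inv A ** D ** matrix_inv A)"
    "\<And>i. \<exists>x. x \<bullet> (A *v x) = 1 \<and> s i = x \<bullet> (D *v x)"
proof -
  obtain Q s where Q1: "transpose Q ** A ** Q = mat 1" and Q2: "transpose Q ** D ** Q = diag_mat s"
    and Q3: "Q ** transpose Q = matrix_inv A" and dA: "det A * (det Q)\<^sup>2 = 1"
    and Qs: "\<And>i. s i = column i Q \<bullet> (D *v column i Q)"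
    using simultaneous_diagonalization[OF assms] by metis
  have "det (A + \<mu> *\<^sub>R D) = det A * (\<Prod>i\<in>UNIV. 1 + \<mu> * s i)" for \<mu>
  proof -
    have "transpose Q ** (A + \<mu> *\<^sub>R D) ** Q = transpose Q ** A ** Q + \<mu> *\<^sub>R (transpose Q ** D ** Q)"
      by (simp add: matrix_add_ldistrib matrix_mult_add_right matrix_scalar_ac scalar_matrix_assoc)
    also have "\<dots> = diag_mat (\<lambda>i. 1 + \<mu> * s i)"
      using Q1 Q2 by (simp add: diag_mat_def mat_def vec_eq_iff)
    finally have "det (transpose Q ** (A + \<mu> *\<^sub>R D) ** Q) = (\<Prod>i\<in>UNIV. 1 + \<mu> * s i)"
      by (simp add: det_diag_mat)
    hence "(det Q)\<^sup>2 * det (A + \<mu> *\<^sub>R D) = (\<Prod>i\<in>UNIV. 1 + \<mu> * s i)"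
      by (simp add: det_mul power2_eq_square mult_ac)
    hence "det A * ((det Q)\<^sup>2 * det (A + \<mu> *\<^sub>R D)) = det A * (\<Prod>i\<in>UNIV. 1 + \<mu> * s i)"
      by simp
    thus ?thesis using dA by (simp add: mult.assoc[symmetric])
  qed
  moreover have "sum s UNIV = trace (D ** matrix_inv A)"
    using trace_congruence(1)[OF Q3, of D] Q2 by (simp add: trace_diag_mat)
  moreover have "(\<Sum>i\<in>UNIV. (s i)\<^sup>2) = trace (D ** matrix_inv A ** D ** matrix_inv A)"
    using trace_congruence(2)[OF Q3, of D] Q2 by (simp add: diag_mat_sq trace_diag_mat)
  moreover have "\<exists>x. x \<bullet> (A *v x) = 1 \<and> s i = x \<bullet> (D *v x)" for i
    using arg_cong[OF Q1, of "\<lambda>M. M $ i $ i"] Qs[of i] by (auto simp: congruence_entry mat_def)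
  ultimately show ?thesis by (rule that)
qed

section \<open>Trace inequalities\<close>

lemma trace_eq_sum_quad_axis: "trace X = (\<Sum>i\<in>UNIV. axis i 1 \<bullet> (X *v axis i 1))"
  for X :: "real^'n^'n"
  by (simp add: trace_def matrix_vector_mult_def inner_vec_def axis_def if_distrib if_distribR
      cong: if_cong)

lemma trace_mono_quad:
  fixes X Y :: "real^'n^'n"
  assumes "\<And>x. x \<bullet> (X *v x) \<le> x \<bullet> (Y *v x)"
  shows "trace X \<le> trace Y"
  unfolding trace_eq_sum_quad_axis by (rule sum_mono) (rule assms)

lemma trace_nonneg_quad:
  fixes X :: "real^'n^'n"
  assumes "\<And>x. 0 \<le> x \<bullet> (X *v x)"
  shows "0 \<le> trace X"
  unfolding trace_eq_sum_quad_axis by (rule sum_nonneg) (rule assms)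

lemma trace_scaleR: "trace (k *\<^sub>R A) = k * trace A"
  for A :: "real^'n^'n"
  by (simp add: trace_def sum_distrib_left)

lemma trace_le_card:
  fixes X :: "real^'n^'n"
  assumes "\<And>x. x \<bullet> (X *v x) \<le> k * (x \<bullet> x)"
  shows "trace X \<le> k * real CARD('n)"
proof -
  have "trace X \<le> trace (k *\<^sub>R (mat 1 :: real^'n^'n))"
    by (rule trace_mono_quad) (use assms in \<open>simp add: quad_form_scaled_id\<close>)
  thus ?thesis by (simp add: trace_scaleR trace_I)
qed

lemma trace_mult_psd_nonneg:
  fixes P W :: "real^'n^'n"
  assumes Pnn: "\<And>x. 0 \<le> x \<bullet> (P *v x)" and W: "psd W"
  shows "0 \<le> trace (P ** W)"
proof -
  have sW: "transpose W = W" and Wnn: "\<And>x. 0 \<le> x \<bullet> (W *v x)" using W by (auto simp: psd_def)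
  obtain Q s where Q1: "transpose Q ** mat 1 ** Q = mat 1" and Q2: "transpose Q ** W ** Q = diag_mat s"
    and Q3: "Q ** transpose Q = matrix_inv (mat 1 :: real^'n^'n)"
    and "invertible (mat 1 :: real^'n^'n)" "det (mat 1 :: real^'n^'n) * (det Q)\<^sup>2 = 1"
    and Qs: "\<And>i. s i = column i Q \<bullet> (W *v column i Q)"
    using simultaneous_diagonalization[of "mat 1" W 1] sW by (metis transpose_mat zero_less_one
        matrix_vector_mul_lid mult_1 order_refl)
  have QQ: "Q ** transpose Q = mat 1" using Q3 matrix_inv_mat_1 by simp
  have "W = (Q ** transpose Q) ** W ** (Q ** transpose Q)" using QQ by simp
  also have "\<dots> = Q ** (transpose Q ** W ** Q) ** transpose Q" by (simp only: matrix_mul_assoc)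
  finally have "trace (P ** W) = trace ((P ** Q ** diag_mat s) ** transpose Q)"
    using Q2 by (simp only: matrix_mul_assoc)
  also have "\<dots> = trace ((transpose Q ** P ** Q) ** diag_mat s)"
    by (simp only: trace_mul_sym[of _ "transpose Q"] matrix_mul_assoc)
  also have "\<dots> = (\<Sum>i\<in>UNIV. (column i Q \<bullet> (P *v column i Q)) * s i)"
    by (simp add: trace_mult_diag_mat congruence_entry)
  also have "\<dots> \<ge> 0" using Pnn Wnn Qs by (intro sum_nonneg mult_nonneg_nonneg) auto
  finally show ?thesis .
qed

lemma trace_mult_mono:
  fixes X Y W :: "real^'n^'n"
  assumes "\<And>x. x \<bullet> (X *v x) \<le> x \<bullet> (Y *v x)" and "psd W"
  shows "trace (X ** W) \<le> trace (Y ** W)"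
proof -
  have "0 \<le> trace ((Y - X) ** W)"
    by (rule trace_mult_psd_nonneg[OF _ assms(2)]) (use assms(1) in \<open>simp add: quad_form_diff\<close>)
  thus ?thesis by (simp add: matrix_mult_diff_right trace_sub)
qed

lemma trace_mult_le_scaled:
  fixes X Y W :: "real^'n^'n"
  assumes "\<And>x. x \<bullet> (X *v x) \<le> k * (x \<bullet> (Y *v x))" and "psd W"
  shows "trace (X ** W) \<le> k * trace (Y ** W)"
proof -
  have "trace (X ** W) \<le> trace ((k *\<^sub>R Y) ** W)"
    by (rule trace_mult_mono[OF _ assms(2)]) (use assms(1) in \<open>simp add: quad_form_scaleR\<close>)
  thus ?thesis by (simp add: scalar_matrix_assoc[symmetric] trace_scaleR)
qed

lemma trace_mult_le_scaled_id:
  fixes X W :: "real^'n^'n"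
  assumes "\<And>x. x \<bullet> (X *v x) \<le> k * (x \<bullet> x)" and "psd W"
  shows "trace (X ** W) \<le> k * trace W"
  using trace_mult_le_scaled[of X k "mat 1" W] assms by simp

lemma trace_mult_add_scaled_id: "trace ((X + e *\<^sub>R mat 1) ** W) = trace (X ** W) + e * trace W"
  for X W :: "real^'n^'n"
  by (simp add: matrix_mult_add_right trace_add scalar_matrix_assoc[symmetric] trace_scaleR)

lemma trace_mult_self_eq_norm_sq:
  fixes X :: "real^'n^'n"
  assumes "transpose X = X"
  shows "trace (X ** X) = (norm X)\<^sup>2"
proof -
  have "\<And>i k. X $ k $ i = X $ i $ k" using assms by (metis transpose_def vec_lambda_beta)
  hence "trace (X ** X) = (\<Sum>i\<in>UNIV. \<Sum>k\<in>UNIV. X $ i $ k * X $ i $ k)"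
    by (simp add: trace_def matrix_matrix_mult_def)
  also have "\<dots> = X \<bullet> X" by (simp add: inner_vec_def)
  finally show ?thesis by (simp add: power2_norm_eq_inner)
qed

lemma real_sqrt_le_self:
  assumes "1 \<le> x"
  shows "sqrt x \<le> x"
proof -
  have "sqrt x * 1 \<le> sqrt x * sqrt x" using assms by (intro mult_left_mono) auto
  thus ?thesis using assms by simp
qed

text \<open>Cauchy--Schwarz against the all-ones vector: the diagonal has Euclidean norm at most
  \<open>\<parallel>W\<parallel>\<^sub>F\<close>.\<close>

lemma trace_le_sqrt_card:
  fixes W :: "real^'n^'n"
  assumes "norm W \<le> 1"
  shows "trace W \<le> sqrt (real CARD('n))"
proof -
  define v :: "real^'n" where "v = (\<chi> i. W $ i $ i)"
  define one :: "real^'n" where "one = (\<chi> i. 1)"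
  have "v \<bullet> v = (\<Sum>i\<in>UNIV. W $ i $ i * W $ i $ i)" by (simp add: v_def inner_vec_def)
  also have "\<dots> \<le> (\<Sum>i\<in>UNIV. \<Sum>j\<in>UNIV. W $ i $ j * W $ i $ j)"
    by (intro sum_mono) (rule member_le_sum; simp)
  also have "\<dots> = (norm W)\<^sup>2" by (simp add: inner_vec_def power2_norm_eq_inner)
  also have "\<dots> \<le> 1" using assms by (simp add: power_le_one)
  finally have "norm v \<le> 1" by (simp add: norm_eq_sqrt_inner)
  have "trace W = v \<bullet> one" by (simp add: trace_def v_def one_def inner_vec_def)
  also have "\<dots> \<le> norm v * norm one" by (rule norm_cauchy_schwarz)
  also have "\<dots> \<le> norm one" using \<open>norm v \<le> 1\<close> by (simp add: mult_left_le_one_le)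
  also have "norm one = sqrt (real CARD('n))" by (simp add: norm_eq_sqrt_inner one_def inner_vec_def)
  finally show ?thesis .
qed

section \<open>Shifted positive semidefinite matrices\<close>

lemma shifted_psd_inverse:
  fixes X :: "real^'n^'n"
  assumes X: "psd X" and g: "0 < g"
  shows "invertible (g *\<^sub>R mat 1 + X)" "psd (matrix_inv (g *\<^sub>R mat 1 + X))"
    "\<And>x. x \<bullet> (matrix_inv (g *\<^sub>R mat 1 + X) *v x) \<le> (1/g) * (x \<bullet> x)"
proof -
  note shift = psd_shift[OF X, of g]
  show inv: "invertible (g *\<^sub>R mat 1 + X)" by (rule posdef_invertible[OF shift(1) g shift(2)])
  have psd: "psd (g *\<^sub>R mat 1 + X)"
    using shift quad_form_nonneg_if_bounded_below[OF g shift(2)] by (simp add: psd_def)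
  show "psd (matrix_inv (g *\<^sub>R mat 1 + X))" by (rule psd_matrix_inv[OF psd inv])
  fix x
  have "x \<bullet> (matrix_inv (g *\<^sub>R mat 1 + X) *v x) \<le> x \<bullet> (matrix_inv (g *\<^sub>R mat 1 :: real^'n^'n) *v x)"
    using psd X g matrix_inv_scaled_id[of g]
    by (intro quad_form_matrix_inv_antimono inv)
      (auto simp: psd_def transpose_scalar quad_form_add quad_form_scaled_id)
  also have "\<dots> = (1/g) * (x \<bullet> x)" using g by (simp add: matrix_inv_scaled_id quad_form_scaled_id)
  finally show "x \<bullet> (matrix_inv (g *\<^sub>R mat 1 + X) *v x) \<le> (1/g) * (x \<bullet> x)" .
qed

lemma trace_shifted_inverse_mult_le:
  fixes E :: "real^'n^'n"
  assumes E: "psd E" and g: "0 < g"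
  shows "trace (matrix_inv (g *\<^sub>R mat 1 + E) ** E) \<le> real CARD('n)"
proof -
  define Ai where "Ai = matrix_inv (g *\<^sub>R mat 1 + E)"
  have "Ai ** (g *\<^sub>R mat 1 + E) = mat 1"
    using matrix_inv_cancel(2) shifted_psd_inverse(1)[OF E g] by (simp add: Ai_def)
  hence "g * trace Ai + trace (Ai ** E) = real CARD('n)"
    by (metis matrix_add_ldistrib trace_add trace_I of_nat_id matrix_scalar_ac matrix_mul_rid trace_scaleR)
  moreover have "0 \<le> trace Ai"
    using shifted_psd_inverse(2)[OF E g] by (intro trace_nonneg_quad) (simp add: Ai_def psd_def)
  ultimately show ?thesis using g unfolding Ai_def by (smt (verit) mult_nonneg_nonneg)
qed

lemma shifted_quad_form_le_scaled:
  fixes X Y :: "real^'n^'n"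
  assumes Xnn: "0 \<le> x \<bullet> (X *v x)" and err: "\<bar>x \<bullet> (Y *v x) - x \<bullet> (X *v x)\<bar> \<le> k * g * (x \<bullet> x)"
    and k: "0 \<le> k"
  shows "x \<bullet> ((g *\<^sub>R mat 1 + Y) *v x) \<le> (1 + k) * (x \<bullet> ((g *\<^sub>R mat 1 + X) *v x))"
proof -
  have "k * g * (x \<bullet> x) \<le> k * (g * (x \<bullet> x) + x \<bullet> (X *v x))"
    using k Xnn by (simp add: algebra_simps)
  moreover have "(1 + k) * (g * (x \<bullet> x) + x \<bullet> (X *v x))
      = g * (x \<bullet> x) + x \<bullet> (X *v x) + k * (g * (x \<bullet> x) + x \<bullet> (X *v x))"
    by (simp add: algebra_simps)
  ultimately show ?thesis using err unfolding quad_form_add quad_form_scaled_id by linarith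
qed

lemma norm_shifted_inverse_le:
  fixes X :: "real^'n^'n"
  assumes X: "psd X" and g: "0 < g"
  shows "norm (matrix_inv (g *\<^sub>R mat 1 + X)) \<le> sqrt (real CARD('n)) / g"
proof -
  define Ai where "Ai = matrix_inv (g *\<^sub>R mat 1 + X)"
  note Ai = shifted_psd_inverse(2,3)[OF X g, folded Ai_def]
  have "(norm Ai)\<^sup>2 = trace (Ai ** Ai)"
    using Ai trace_mult_self_eq_norm_sq[of Ai] by (simp add: psd_def)
  also have "\<dots> \<le> (1/g) * trace Ai" by (rule trace_mult_le_scaled_id[OF Ai(2) Ai(1)])
  also have "\<dots> \<le> (1/g) * ((1/g) * real CARD('n))"
    using trace_le_card[OF Ai(2)] g by (intro mult_left_mono) auto
  also have "\<dots> = (sqrt (real CARD('n)) / g)\<^sup>2" by (simp add: power2_eq_square)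
  finally show ?thesis unfolding Ai_def by (rule power2_le_imp_le) (use g in simp)
qed

lemma trace_shifted_inverse_mult_le_sqrt:
  fixes X V :: "real^'n^'n"
  assumes X: "psd X" and g: "0 < g" and V: "psd V" "norm V \<le> 1"
  shows "trace (matrix_inv (g *\<^sub>R mat 1 + X) ** V) \<le> sqrt (real CARD('n)) / g"
proof -
  have "trace (matrix_inv (g *\<^sub>R mat 1 + X) ** V) \<le> (1/g) * trace V"
    by (rule trace_mult_le_scaled_id[OF shifted_psd_inverse(3)[OF X g] V(1)])
  also have "\<dots> \<le> (1/g) * sqrt (real CARD('n))"
    using trace_le_sqrt_card[OF V(2)] g by (intro mult_left_mono) auto
  finally show ?thesis by simp
qed

section \<open>The log-determinant potential\<close>

lemma ln_one_plus_ge_sub_sq: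
  fixes x :: real
  assumes "-1/2 \<le> x"
  shows "x - x\<^sup>2 \<le> ln (1 + x)"
proof -
  define g where "g = (\<lambda>x::real. ln (1 + x) - x + x\<^sup>2)"
  have der: "DERIV g y :> (y * (1 + 2*y) / (1 + y))" if "-1/2 \<le> y" for y
  proof -
    have "DERIV g y :> (1 / (1 + y) - 1 + 2 * y)"
      unfolding g_def using that by (auto intro!: derivative_eq_intros simp: field_simps)
    moreover have "1 / (1 + y) - 1 + 2 * y = y * (1 + 2*y) / (1 + y)"
      using that by (simp add: field_simps)
    ultimately show ?thesis by simp
  qed
  have "g 0 \<le> g x"
  proof (cases "x \<le> 0")
    case True
    show ?thesis
    proof (rule DERIV_nonpos_imp_nonincreasing[OF True])
      fix y assume "x \<le> y" "y \<le> 0"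
      hence "y * (1 + 2*y) / (1 + y) \<le> 0" using assms
        by (intro divide_nonpos_pos mult_nonpos_nonneg) auto
      moreover have "-1/2 \<le> y" using \<open>x \<le> y\<close> assms by simp
      ultimately show "\<exists>z. DERIV g y :> z \<and> z \<le> 0" using der by blast
    qed
  next
    case False
    show ?thesis
    proof (rule DERIV_nonneg_imp_nondecreasing[of 0 x])
      fix y assume "0 \<le> y" "y \<le> x"
      hence "y * (1 + 2*y) / (1 + y) \<ge> 0" "-1/2 \<le> y" by simp_all
      thus "\<exists>z. DERIV g y :> z \<and> z \<ge> 0" using der by blast
    qed (use False in simp)
  qed
  thus ?thesis by (simp add: g_def)
qed

lemma ln_mult_prod:
  fixes f :: "'a \<Rightarrow> real"
  assumes "finite S" "0 < a" "\<And>i. i \<in> S \<Longrightarrow> 0 < f i"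
  shows "ln (a * prod f S) = ln a + (\<Sum>i\<in>S. ln (f i))"
  using assms by (simp add: ln_mult_pos prod_pos ln_prod[OF assms(1)] less_imp_neq[symmetric])

text \<open>Second-order lower bound for \<open>ln det\<close> along a direction \<open>D\<close>; the constraint \<open>A + D \<ge> 0\<close>
  makes every generalised eigenvalue \<open>s\<^sub>i \<ge> -1\<close>, so \<open>\<mu> \<le> 1/2\<close> keeps \<open>\<mu> s\<^sub>i \<ge> -1/2\<close>.\<close>

lemma ln_det_add_ge:
  fixes A D :: "real^'n^'n"
  assumes sA: "transpose A = A" and sD: "transpose D = D" and c: "c > 0"
    and Apos: "\<And>x. c * (x \<bullet> x) \<le> x \<bullet> (A *v x)"
    and ADnn: "\<And>x. 0 \<le> x \<bullet> ((A + D) *v x)"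
    and \<mu>: "0 \<le> \<mu>" "\<mu> \<le> 1/2"
  shows "ln (det A) + \<mu> * trace (D ** matrix_inv A) - \<mu>\<^sup>2 * trace (D ** matrix_inv A ** D ** matrix_inv A)
           \<le> ln (det (A + \<mu> *\<^sub>R D))"
proof -
  obtain s :: "'n \<Rightarrow> real" where det: "\<And>\<mu>. det (A + \<mu> *\<^sub>R D) = det A * (\<Prod>i\<in>UNIV. 1 + \<mu> * s i)"
    and tr1: "sum s UNIV = trace (D ** matrix_inv A)"
    and tr2: "(\<Sum>i\<in>UNIV. (s i)\<^sup>2) = trace (D ** matrix_inv A ** D ** matrix_inv A)"
    and ray: "\<And>i. \<exists>x. x \<bullet> (A *v x) = 1 \<and> s i = x \<bullet> (D *v x)"
    using generalized_eigenvalues[OF sA sD c Apos] by metis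
  have half: "\<mu> * s i \<ge> -1/2" for i
  proof -
    obtain x where "x \<bullet> (A *v x) = 1" "s i = x \<bullet> (D *v x)" using ray[of i] by blast
    hence "s i \<ge> -1" using ADnn[of x] by (simp add: quad_form_add)
    hence "\<mu> * s i \<ge> \<mu> * (-1)" using \<mu> by (intro mult_left_mono) auto
    thus ?thesis using \<mu> by simp
  qed
  have pos: "0 < 1 + \<mu> * s i" for i using half[of i] by linarith
  have "ln (det (A + \<mu> *\<^sub>R D)) = ln (det A) + (\<Sum>i\<in>UNIV. ln (1 + \<mu> * s i))"
    unfolding det by (rule ln_mult_prod) (simp_all add: posdef_det_pos[OF sA c Apos] pos)
  moreover have "(\<Sum>i\<in>UNIV. \<mu> * s i - (\<mu> * s i)\<^sup>2) \<le> (\<Sum>i\<in>UNIV. ln (1 + \<mu> * s i))"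
    using half ln_one_plus_ge_sub_sq by (intro sum_mono) auto
  moreover have "(\<Sum>i\<in>UNIV. \<mu> * s i - (\<mu> * s i)\<^sup>2) = \<mu> * sum s UNIV - \<mu>\<^sup>2 * (\<Sum>i\<in>UNIV. (s i)\<^sup>2)"
    by (simp add: sum_subtractf sum_distrib_left power_mult_distrib)
  ultimately show ?thesis unfolding tr1[symmetric] tr2[symmetric] by linarith
qed

lemma det_scaled_id: "det (k *\<^sub>R mat 1 :: real^'n^'n) = k ^ CARD('n)"
proof -
  have "k *\<^sub>R mat 1 = (mat k :: real^'n^'n)" by (simp add: mat_def vec_eq_iff)
  thus ?thesis by (simp, subst det_diagonal) (auto simp: mat_def)
qed

text \<open>The generalised eigenvalues of \<open>E\<close> relative to \<open>g I\<close> lie in \<open>[0, 1/g]\<close>, since their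
  squares sum to \<open>\<parallel>E\<parallel>\<^sub>F\<^sup>2 / g\<^sup>2\<close>.\<close>

lemma ln_det_shift_bounds:
  fixes E :: "real^'n^'n"
  assumes E: "psd E" and nE: "norm E \<le> 1" and g: "g > 0"
  shows "real CARD('n) * ln g \<le> ln (det (g *\<^sub>R mat 1 + E))"
    "ln (det (g *\<^sub>R mat 1 + E)) \<le> real CARD('n) * ln g + real CARD('n) * ln (1 + 1/g)"
proof -
  define A :: "real^'n^'n" where "A = g *\<^sub>R mat 1"
  have sA: "transpose A = A" by (simp add: A_def transpose_scalar)
  have Apos: "\<And>x. g * (x \<bullet> x) \<le> x \<bullet> (A *v x)" by (simp add: A_def quad_form_scaled_id)
  have sE: "transpose E = E" using E by (simp add: psd_def)
  obtain s :: "'n \<Rightarrow> real" where det: "\<And>\<mu>. det (A + \<mu> *\<^sub>R E) = det A * (\<Prod>i\<in>UNIV. 1 + \<mu> * s i)"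
    and tr1: "sum s UNIV = trace (E ** matrix_inv A)"
    and tr2: "(\<Sum>i\<in>UNIV. (s i)\<^sup>2) = trace (E ** matrix_inv A ** E ** matrix_inv A)"
    and ray: "\<And>i. \<exists>x. x \<bullet> (A *v x) = 1 \<and> s i = x \<bullet> (E *v x)"
    using generalized_eigenvalues[OF sA sE g Apos] by metis
  have s0: "0 \<le> s i" for i using ray[of i] E by (auto simp: psd_def)
  have "(\<Sum>i\<in>UNIV. (s i)\<^sup>2) = (1/g)\<^sup>2 * trace (E ** E)"
    using g unfolding tr2 A_def matrix_inv_scaled_id[OF g[THEN less_imp_neq, symmetric]]
    by (simp add: matrix_scalar_ac scalar_matrix_assoc[symmetric] trace_scaleR power2_eq_square)
  also have "\<dots> \<le> (1/g)\<^sup>2"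
    using nE trace_mult_self_eq_norm_sq[OF sE] by (simp add: power_le_one mult_left_le)
  finally have sq: "(\<Sum>i\<in>UNIV. (s i)\<^sup>2) \<le> (1/g)\<^sup>2" .
  have s_le: "s i \<le> 1/g" for i
  proof -
    have "(s i)\<^sup>2 \<le> (\<Sum>i\<in>UNIV. (s i)\<^sup>2)" by (rule member_le_sum) auto
    hence "(s i)\<^sup>2 \<le> (1/g)\<^sup>2" using sq by linarith
    thus ?thesis using g s0[of i] by (simp add: power2_le_iff_abs_le)
  qed
  have "det (g *\<^sub>R mat 1 + E) = g ^ CARD('n) * (\<Prod>i\<in>UNIV. 1 + s i)"
    using det[of 1] by (simp add: A_def det_scaled_id)
  hence "ln (det (g *\<^sub>R mat 1 + E)) = ln (g ^ CARD('n)) + (\<Sum>i\<in>UNIV. ln (1 + s i))"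
    using g s0 by (simp add: ln_mult_prod add_pos_nonneg)
  hence "ln (det (g *\<^sub>R mat 1 + E)) = real CARD('n) * ln g + (\<Sum>i\<in>UNIV. ln (1 + s i))"
    using g by (simp add: ln_realpow)
  moreover have "0 \<le> (\<Sum>i\<in>UNIV. ln (1 + s i))" using s0 by (intro sum_nonneg) simp
  moreover have "(\<Sum>i\<in>UNIV. ln (1 + s i)) \<le> (\<Sum>i\<in>(UNIV::'n set). ln (1 + 1/g))"
  proof (rule sum_mono)
    fix i show "ln (1 + s i) \<le> ln (1 + 1/g)" using s_le[of i] s0[of i] g by simp
  qed
  ultimately show "real CARD('n) * ln g \<le> ln (det (g *\<^sub>R mat 1 + E))"
    "ln (det (g *\<^sub>R mat 1 + E)) \<le> real CARD('n) * ln g + real CARD('n) * ln (1 + 1/g)"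
    by simp_all
qed

lemma psd_congruence:
  fixes D B :: "real^'n^'n"
  assumes B: "psd B" and sD: "transpose D = D"
  shows "psd (D ** B ** D)"
proof -
  have "x \<bullet> ((D ** B ** D) *v x) = (D *v x) \<bullet> (B *v (D *v x))" for x
    using symmetric_inner_commute[OF sD, of x "B *v (D *v x)"]
    by (simp add: matrix_vector_mul_assoc[symmetric] inner_commute)
  thus ?thesis using B sD by (simp add: psd_def matrix_transpose_mul matrix_mul_assoc)
qed

lemma trace_sq_diff_psd_le:
  fixes V E :: "real^'n^'n"
  assumes V: "psd V" "norm V \<le> 1" and E: "psd E" "norm E \<le> 1"
  shows "trace ((V - E) ** (V - E)) \<le> 2"
proof -
  have "trace ((V - E) ** (V - E)) = trace (V ** V) - trace (V ** E) - trace (E ** V) + trace (E ** E)"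
    by (simp add: matrix_mult_diff_left matrix_mult_diff_right trace_sub)
  moreover have "trace (V ** V) \<le> 1" "trace (E ** E) \<le> 1"
    using V E trace_mult_self_eq_norm_sq[of V] trace_mult_self_eq_norm_sq[of E]
    by (auto simp: psd_def power_le_one)
  moreover have "0 \<le> trace (V ** E)" "0 \<le> trace (E ** V)"
    using V E by (auto intro!: trace_mult_psd_nonneg simp: psd_def)
  ultimately show ?thesis by linarith
qed

text \<open>Second-order term of the log-determinant expansion: twice
  \<open>Tr (X A\<^sup>-\<^sup>1) \<le> Tr X / g\<close>, then \<open>\<parallel>V - E\<parallel>\<^sub>F\<^sup>2 \<le> 2\<close>.\<close>

lemma trace_sq_inv_diff_le:
  fixes Ai V E :: "real^'n^'n"
  assumes Ai: "psd Ai" and Ai_le: "\<And>x. x \<bullet> (Ai *v x) \<le> (1/g) * (x \<bullet> x)" and g: "g > 0"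
    and V: "psd V" "norm V \<le> 1" and E: "psd E" "norm E \<le> 1"
  shows "trace ((V - E) ** Ai ** (V - E) ** Ai) \<le> 2 / g\<^sup>2"
proof -
  define D where "D = V - E"
  have sD: "transpose D = D" using V E by (simp add: D_def psd_def transpose_diff)
  have "psd (mat 1 :: real^'n^'n)" by (simp add: psd_def)
  from psd_congruence[OF this sD] have DD: "psd (D ** D)" by simp
  have "trace (D ** Ai ** D ** Ai) = trace (Ai ** (D ** Ai ** D))"
    by (simp add: trace_mul_sym[of _ Ai] matrix_mul_assoc)
  also have "\<dots> \<le> (1/g) * trace (D ** Ai ** D)"
    by (rule trace_mult_le_scaled_id[OF Ai_le psd_congruence[OF Ai sD]])
  finally have h1: "trace (D ** Ai ** D ** Ai) \<le> (1/g) * trace (D ** Ai ** D)" .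
  have "trace (D ** Ai ** D) = trace (Ai ** (D ** D))"
    using trace_mul_sym[of D "Ai ** D"] by (simp add: matrix_mul_assoc)
  also have "\<dots> \<le> (1/g) * trace (D ** D)" by (rule trace_mult_le_scaled_id[OF Ai_le DD])
  also have "\<dots> \<le> (1/g) * 2"
    using trace_sq_diff_psd_le[OF V E] g by (simp add: D_def divide_right_mono)
  finally have "(1/g) * trace (D ** Ai ** D) \<le> (1/g) * ((1/g) * 2)"
    using g by (intro mult_left_mono) auto
  with h1 have "trace (D ** Ai ** D ** Ai) \<le> (1/g) * ((1/g) * 2)" by linarith
  thus ?thesis by (simp add: D_def power2_eq_square)
qed

section \<open>Finitely supported distributions\<close>

lemma fsupp_delta: "fsupp (delta y) = {y}"
  by (auto simp: fsupp_def delta_def)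

lemma expW_delta: "expW W (delta y) = W y"
  unfolding expW_def fsupp_delta by (simp add: delta_def)

lemma is_fdist_delta: "y \<in> S \<Longrightarrow> is_fdist (delta y) S"
  by (simp add: is_fdist_def fsupp_delta) (simp add: delta_def)

lemma fsupp_mix_subset: "fsupp (\<lambda>z. a * P z + b * delta y z) \<subseteq> insert y (fsupp P)"
  by (auto simp: fsupp_def delta_def)

lemma sum_fsupp_superset:
  fixes f :: "'z \<Rightarrow> 'a::comm_monoid_add"
  assumes "finite S" "fsupp P \<subseteq> S" "\<And>z. P z = 0 \<Longrightarrow> f z = 0"
  shows "sum f (fsupp P) = sum f S"
  by (rule sum.mono_neutral_left) (use assms in \<open>auto simp: fsupp_def\<close>)

lemma sum_delta_scaleR:
  assumes "finite S" "y \<in> S"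
  shows "(\<Sum>z\<in>S. delta y z *\<^sub>R (f z :: 'a::real_vector)) = f y"
proof -
  have "(\<Sum>z\<in>S. delta y z *\<^sub>R f z) = (\<Sum>z\<in>S. if z = y then f z else 0)"
    by (rule sum.cong) (auto simp: delta_def)
  thus ?thesis using assms by simp
qed

lemma expW_mix:
  assumes "finite (fsupp P)"
  shows "expW W (\<lambda>z. a * P z + b * delta y z) = a *\<^sub>R expW W P + b *\<^sub>R W y"
proof -
  let ?S = "insert y (fsupp P)"
  have fS: "finite ?S" using assms by simp
  have "expW W (\<lambda>z. a * P z + b * delta y z) = (\<Sum>z\<in>?S. (a * P z + b * delta y z) *\<^sub>R W z)"
    unfolding expW_def by (rule sum_fsupp_superset[OF fS fsupp_mix_subset]) simp
  also have "\<dots> = a *\<^sub>R (\<Sum>z\<in>?S. P z *\<^sub>R W z) + b *\<^sub>R (\<Sum>z\<in>?S. delta y z *\<^sub>R W z)"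
    by (simp add: scaleR_add_left sum.distrib scaleR_sum_right)
  also have "(\<Sum>z\<in>?S. P z *\<^sub>R W z) = expW W P"
    unfolding expW_def by (rule sum_fsupp_superset[symmetric]) (use fS in auto)
  also have "(\<Sum>z\<in>?S. delta y z *\<^sub>R W z) = W y" using fS by (simp add: sum_delta_scaleR)
  finally show ?thesis .
qed

lemma is_fdist_mix:
  assumes P: "is_fdist P S" and y: "y \<in> S" and m: "0 \<le> m" "m \<le> 1"
  shows "is_fdist (\<lambda>z. (1 - m) * P z + m * delta y z) S"
proof -
  let ?Q = "\<lambda>z. (1 - m) * P z + m * delta y z"
  let ?S = "insert y (fsupp P)"
  have fS: "finite ?S" using P by (simp add: is_fdist_def)
  have "sum ?Q (fsupp ?Q) = sum ?Q ?S"
    by (rule sum_fsupp_superset[OF fS fsupp_mix_subset]) simp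
  also have "\<dots> = (1 - m) * sum P ?S + m * sum (delta y) ?S"
    by (simp add: sum.distrib sum_distrib_left)
  also have "sum P ?S = 1" using sum_fsupp_superset[OF fS, of P P] P by (auto simp: is_fdist_def)
  also have "sum (delta y) ?S = 1" using sum_delta_scaleR[OF fS, of y "\<lambda>_. 1::real"] by simp
  finally have "sum ?Q (fsupp ?Q) = 1" by simp
  moreover have "\<forall>z. 0 \<le> ?Q z" using P m unfolding is_fdist_def
    by (auto simp: delta_def intro!: add_nonneg_nonneg mult_nonneg_nonneg)
  ultimately show ?thesis
    using finite_subset[OF fsupp_mix_subset fS] fsupp_mix_subset[of "1 - m" P m y] P y
    unfolding is_fdist_def by blast
qed

lemma quad_form_expW:
  fixes W :: "'z \<Rightarrow> real^'n^'n"
  shows "x \<bullet> (expW W P *v x) = (\<Sum>z\<in>fsupp P. P z * (x \<bullet> (W z *v x)))"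
proof -
  have "(sum f S) *v x = (\<Sum>z\<in>S. f z *v x)" for f :: "'z \<Rightarrow> real^'n^'n" and S
    by (induction S rule: infinite_finite_induct) (simp_all add: matrix_vector_mult_add_rdistrib)
  thus ?thesis by (simp add: expW_def inner_sum_right scaleR_matrix_vector_assoc[symmetric])
qed

lemma psd_expW:
  assumes "is_fdist P S" "\<And>z. psd (W z)"
  shows "psd (expW W P)"
proof -
  have "transpose (expW W P) = expW W P"
    using assms by (simp add: expW_def transpose_sum transpose_scalar psd_def)
  moreover have "0 \<le> x \<bullet> (expW W P *v x)" for x
    using assms unfolding quad_form_expW psd_def is_fdist_def
    by (intro sum_nonneg mult_nonneg_nonneg) auto
  ultimately show ?thesis by (simp add: psd_def)
qed

lemma norm_expW_le:
  assumes "is_fdist P S" "\<And>z. norm (W z) \<le> 1"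
  shows "norm (expW W P) \<le> 1"
proof -
  have "norm (expW W P) \<le> (\<Sum>z\<in>fsupp P. norm (P z *\<^sub>R W z))" unfolding expW_def by (rule norm_sum)
  also have "\<dots> \<le> (\<Sum>z\<in>fsupp P. P z)"
    using assms unfolding is_fdist_def by (intro sum_mono) (simp add: mult_left_le)
  also have "\<dots> = 1" using assms unfolding is_fdist_def by simp
  finally show ?thesis .
qed

section \<open>Analysis of FW-OptDesign\<close>

definition fw_test :: "(real^'n^'n \<Rightarrow> 'z) \<Rightarrow> (('z \<Rightarrow> real) \<Rightarrow> real^'n^'n) \<Rightarrow> real \<Rightarrow> real
    \<Rightarrow> ('z \<Rightarrow> real) \<Rightarrow> bool" where
  "fw_test LinOpt LinEst C \<gamma> P \<longleftrightarrow>
     trace (matrix_inv (fw_M LinEst \<gamma> P) ** LinEst (delta (fw_zt LinOpt LinEst \<gamma> P)))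
       \<le> (1 + C) * real CARD('n)"

lemma fw_stop_eq_fw_test:
  "fw_stop LinOpt LinEst C \<gamma> t = fw_test LinOpt LinEst C \<gamma> (fw_P LinOpt LinEst C \<gamma> t)"
  by (simp add: fw_stop_def fw_test_def Let_def)

locale fw_optdesign =
  fixes W :: "'z \<Rightarrow> real^'n^'n"
    and LinOpt :: "real^'n^'n \<Rightarrow> 'z"
    and LinEst :: "('z \<Rightarrow> real) \<Rightarrow> real^'n^'n"
    and Zref Zsupp :: "'z set"
    and C \<gamma> :: real
  assumes W_psd: "\<And>z. psd (W z)"
    and W_norm: "\<And>z. norm (W z) \<le> 1"
    and C_gt_1: "1 < C" and C_le_2: "C \<le> 2"
    and \<gamma>_pos: "0 < \<gamma>" and \<gamma>_lt_1: "\<gamma> < 1"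
    and approx: "approx_assumption W LinOpt LinEst Zref Zsupp (C * \<gamma> / 5) (C * \<gamma>\<^sup>2 / 10)"
begin

abbreviation design :: "('z \<Rightarrow> real) \<Rightarrow> real^'n^'n" where
  "design P \<equiv> \<gamma> *\<^sub>R mat 1 + expW W P"

definition potential :: "('z \<Rightarrow> real) \<Rightarrow> real" where
  "potential P = ln (det (design P))"

text \<open>Both estimation errors are multiples of \<open>\<kappa>\<close>: \<open>\<epsilon>\<^sub>L\<^sub>i\<^sub>n\<^sub>E\<^sub>s\<^sub>t = \<kappa> \<gamma>\<close> and \<open>\<epsilon>\<^sub>L\<^sub>i\<^sub>n\<^sub>O\<^sub>p\<^sub>t = 2 \<kappa>\<close>.\<close>

definition \<kappa> :: real where "\<kappa> = C * \<gamma> / 10"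

lemma \<kappa>_pos: "0 < \<kappa>"
  using C_gt_1 \<gamma>_pos by (simp add: \<kappa>_def)

lemma LinOpt_in_Zsupp: "LinOpt M \<in> Zsupp"
  using approx by (simp add: approx_assumption_def)

lemma fw_zt_in_Zsupp: "fw_zt LinOpt LinEst \<gamma> P \<in> Zsupp"
  unfolding fw_zt_def Let_def by (rule LinOpt_in_Zsupp)

lemma psd_LinEst: "is_fdist P Zsupp \<Longrightarrow> psd (LinEst P)"
  using approx by (simp add: approx_assumption_def)

lemma LinEst_quad_error:
  assumes "is_fdist P Zsupp"
  shows "\<bar>x \<bullet> (LinEst P *v x) - x \<bullet> (expW W P *v x)\<bar> \<le> \<kappa> * \<gamma> * (x \<bullet> x)"
proof -
  have "C * \<gamma>\<^sup>2 / 10 = \<kappa> * \<gamma>" by (simp add: \<kappa>_def power2_eq_square)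
  hence "op_norm (LinEst P - expW W P) \<le> \<kappa> * \<gamma>"
    using approx assms unfolding approx_assumption_def by metis
  hence "\<bar>x \<bullet> ((LinEst P - expW W P) *v x)\<bar> \<le> \<kappa> * \<gamma> * (x \<bullet> x)"
    using quad_form_op_norm[of x "LinEst P - expW W P"] mult_right_mono[of _ _ "x \<bullet> x"]
    by (smt (verit) inner_ge_zero)
  thus ?thesis by (simp add: quad_form_diff)
qed

lemma LinOpt_approx:
  assumes "psd M" "M \<noteq> 0" "z \<in> Zref"
  shows "trace (M ** W z) \<le> trace (M ** W (LinOpt ((1 / norm M) *\<^sub>R M))) + (C * \<gamma> / 5) * norm M"
  using approx assms unfolding approx_assumption_def by blast

lemma psd_expW_W: "is_fdist P Zsupp \<Longrightarrow> psd (expW W P)"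
  by (rule psd_expW[OF _ W_psd])

lemma norm_expW_W_le: "is_fdist P Zsupp \<Longrightarrow> norm (expW W P) \<le> 1"
  by (rule norm_expW_le[OF _ W_norm])

lemma LinEst_delta:
  assumes "z \<in> Zsupp"
  shows "psd (LinEst (delta z))"
    "\<bar>x \<bullet> (LinEst (delta z) *v x) - x \<bullet> (W z *v x)\<bar> \<le> \<kappa> * \<gamma> * (x \<bullet> x)"
  using psd_LinEst LinEst_quad_error is_fdist_delta[OF assms] by (metis expW_delta)+

lemma inverse_design_le_scaled:
  assumes P: "is_fdist P Zsupp"
  shows "x \<bullet> (matrix_inv (design P) *v x) \<le> (1 + \<kappa>) * (x \<bullet> (matrix_inv (fw_M LinEst \<gamma> P) *v x))"
    "x \<bullet> (matrix_inv (fw_M LinEst \<gamma> P) *v x) \<le> (1 + \<kappa>) * (x \<bullet> (matrix_inv (design P) *v x))"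
proof -
  note E = psd_expW_W[OF P] and L = psd_LinEst[OF P]
  note err = LinEst_quad_error[OF P] and k = \<kappa>_pos[THEN less_imp_le]
  have M: "transpose (fw_M LinEst \<gamma> P) = fw_M LinEst \<gamma> P" "invertible (fw_M LinEst \<gamma> P)"
    "\<And>x. 0 \<le> x \<bullet> (fw_M LinEst \<gamma> P *v x)"
    using shifted_psd_inverse(1)[OF L \<gamma>_pos] psd_shift[OF L, of \<gamma>]
      quad_form_nonneg_if_bounded_below[OF \<gamma>_pos] by (auto simp: fw_M_def)
  have A: "transpose (design P) = design P" "invertible (design P)" "\<And>x. 0 \<le> x \<bullet> (design P *v x)"
    using shifted_psd_inverse(1)[OF E \<gamma>_pos] psd_shift[OF E, of \<gamma>]
      quad_form_nonneg_if_bounded_below[OF \<gamma>_pos] by auto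
  have k1: "0 < 1 + \<kappa>" using \<kappa>_pos by simp
  show "x \<bullet> (matrix_inv (design P) *v x) \<le> (1 + \<kappa>) * (x \<bullet> (matrix_inv (fw_M LinEst \<gamma> P) *v x))"
  proof (rule quad_form_matrix_inv_le_scaled[OF M(1) A(2) M(2) M(3) k1])
    fix y show "y \<bullet> (fw_M LinEst \<gamma> P *v y) \<le> (1 + \<kappa>) * (y \<bullet> (design P *v y))"
      unfolding fw_M_def using E err k by (intro shifted_quad_form_le_scaled) (auto simp: psd_def)
  qed
  show "x \<bullet> (matrix_inv (fw_M LinEst \<gamma> P) *v x) \<le> (1 + \<kappa>) * (x \<bullet> (matrix_inv (design P) *v x))"
  proof (rule quad_form_matrix_inv_le_scaled[OF A(1) M(2) A(2) A(3) k1])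
    fix y show "y \<bullet> (design P *v y) \<le> (1 + \<kappa>) * (y \<bullet> (fw_M LinEst \<gamma> P *v y))"
      unfolding fw_M_def using L err k
      by (intro shifted_quad_form_le_scaled) (auto simp: psd_def abs_minus_commute)
  qed
qed

lemma trace_LinEst_delta_le:
  assumes "z \<in> Zsupp"
  shows "trace (LinEst (delta z)) \<le> sqrt (real CARD('n)) + \<kappa> * \<gamma> * real CARD('n)"
proof -
  have "trace (LinEst (delta z)) \<le> trace (W z + (\<kappa> * \<gamma>) *\<^sub>R mat 1)"
  proof (rule trace_mono_quad)
    fix x show "x \<bullet> (LinEst (delta z) *v x) \<le> x \<bullet> ((W z + (\<kappa> * \<gamma>) *\<^sub>R mat 1) *v x)"
      using LinEst_delta(2)[OF assms, of x] by (simp add: quad_form_add quad_form_scaled_id abs_le_iff)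
  qed
  also have "\<dots> \<le> sqrt (real CARD('n)) + \<kappa> * \<gamma> * real CARD('n)"
    using trace_le_sqrt_card[OF W_norm] by (simp add: trace_add trace_scaleR trace_I)
  finally show ?thesis .
qed

lemma not_stop_gamma_small:
  assumes P: "is_fdist P Zsupp" and ns: "\<not> fw_test LinOpt LinEst C \<gamma> P"
  shows "\<gamma> * sqrt (real CARD('n)) * (1 + 9 * C / 10) < 1"
proof -
  define z where "z = fw_zt LinOpt LinEst \<gamma> P"
  define r where "r = sqrt (real CARD('n))"
  have z: "z \<in> Zsupp" by (simp add: z_def fw_zt_in_Zsupp)
  have r: "1 \<le> r" "r * r = real CARD('n)" by (simp_all add: r_def)
  have "(1 + C) * (r * r) < trace (matrix_inv (fw_M LinEst \<gamma> P) ** LinEst (delta z))"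
    using ns r by (simp add: fw_test_def z_def)
  also have "\<dots> \<le> (1/\<gamma>) * trace (LinEst (delta z))"
    using shifted_psd_inverse(3)[OF psd_LinEst[OF P] \<gamma>_pos]
    by (intro trace_mult_le_scaled_id[OF _ LinEst_delta(1)[OF z]]) (simp add: fw_M_def)
  also have "\<dots> \<le> (1/\<gamma>) * (r + \<kappa> * \<gamma> * (r * r))"
    using trace_LinEst_delta_le[OF z] \<gamma>_pos by (intro mult_left_mono) (auto simp: r_def)
  finally have "\<gamma> * ((1 + C) * (r * r)) < r + \<kappa> * \<gamma> * (r * r)"
    using \<gamma>_pos by (simp add: field_simps)
  moreover have "\<kappa> * \<gamma> * (r * r) \<le> C * \<gamma> / 10 * (r * r)"
    unfolding \<kappa>_def using \<gamma>_pos \<gamma>_lt_1 C_gt_1 by (intro mult_right_mono) auto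
  ultimately have "r * (\<gamma> * r * (1 + 9 * C / 10)) < r * 1" by (simp add: algebra_simps)
  thus ?thesis using r by (simp add: r_def mult_ac)
qed

lemma not_stop_step_size_le:
  assumes P: "is_fdist P Zsupp" and ns: "\<not> fw_test LinOpt LinEst C \<gamma> P"
  shows "C * \<gamma>\<^sup>2 * real CARD('n) / 8 \<le> 1/2"
proof -
  define r where "r = \<gamma> * sqrt (real CARD('n))"
  have "0 \<le> r" using \<gamma>_pos by (simp add: r_def)
  moreover have "r * (1 + 9 * C / 10) < 1" using not_stop_gamma_small[OF P ns] by (simp add: r_def)
  moreover have "r * 1 \<le> r * (1 + 9 * C / 10)" using \<open>0 \<le> r\<close> C_gt_1 by (intro mult_left_mono) auto
  ultimately have "r\<^sup>2 \<le> 1" by (simp add: power_le_one)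
  hence "C * r\<^sup>2 \<le> C * 1" using C_gt_1 by (intro mult_left_mono) auto
  hence "C * r\<^sup>2 \<le> 2" using C_le_2 by linarith
  thus ?thesis by (simp add: r_def power_mult_distrib mult_ac)
qed

text \<open>The failed test at the chosen point \<open>z\<close> transfers to \<open>Tr ((\<gamma> I + E\<^sub>P W)\<^sup>-\<^sup>1 W\<^sup>z)\<close>, losing a
  factor \<open>1 + \<kappa>\<close> and an additive \<open>\<kappa> d\<close>.\<close>

lemma not_stop_trace_lower:
  assumes P: "is_fdist P Zsupp" and ns: "\<not> fw_test LinOpt LinEst C \<gamma> P"
  defines "z \<equiv> fw_zt LinOpt LinEst \<gamma> P"
  shows "(1 + 3 * C / 4) * real CARD('n) < trace (matrix_inv (design P) ** W z)"
proof -
  define d where "d = real CARD('n)"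
  define Mi where "Mi = matrix_inv (fw_M LinEst \<gamma> P)"
  define t where "t = trace (matrix_inv (design P) ** W z)"
  have z: "z \<in> Zsupp" by (simp add: z_def fw_zt_in_Zsupp)
  note Mi = shifted_psd_inverse(2,3)[OF psd_LinEst[OF P] \<gamma>_pos, folded fw_M_def, folded Mi_def]
  have "(1 + C) * d < trace (Mi ** LinEst (delta z))"
    using ns by (simp add: fw_test_def Mi_def z_def d_def)
  also have "\<dots> \<le> trace (Mi ** W z) + \<kappa> * \<gamma> * trace Mi"
  proof -
    have "trace (LinEst (delta z) ** Mi) \<le> trace ((W z + (\<kappa> * \<gamma>) *\<^sub>R mat 1) ** Mi)"
    proof (rule trace_mult_mono[OF _ Mi(1)])
      fix x show "x \<bullet> (LinEst (delta z) *v x) \<le> x \<bullet> ((W z + (\<kappa> * \<gamma>) *\<^sub>R mat 1) *v x)"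
        using LinEst_delta(2)[OF z, of x] by (simp add: quad_form_add quad_form_scaled_id abs_le_iff)
    qed
    thus ?thesis by (simp add: trace_mult_add_scaled_id trace_mul_sym[of Mi])
  qed
  also have "\<kappa> * \<gamma> * trace Mi \<le> \<kappa> * d"
    using trace_le_card[OF Mi(2)] \<kappa>_pos \<gamma>_pos unfolding d_def
    by (simp add: mult_left_mono[of _ _ "\<kappa> * \<gamma>", simplified] field_simps)
  also have "trace (Mi ** W z) \<le> (1 + \<kappa>) * t"
    unfolding Mi_def t_def by (rule trace_mult_le_scaled[OF inverse_design_le_scaled(2)[OF P] W_psd])
  finally have t: "(1 + C - \<kappa>) * d < (1 + \<kappa>) * t" by (simp add: algebra_simps)
  have "\<gamma> * (1 + 9 * C / 10) \<le> \<gamma> * sqrt d * (1 + 9 * C / 10)"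
    using \<gamma>_pos C_gt_1 by (intro mult_right_mono) (auto simp: d_def)
  hence small: "\<gamma> * (1 + 9 * C / 10) < 1" using not_stop_gamma_small[OF P ns] by (simp add: d_def)
  have "\<gamma> * (8 + 3 * C) \<le> \<gamma> * (10 + 9 * C)" using \<gamma>_pos C_gt_1 by (intro mult_left_mono) auto
  also have "\<dots> = 10 * (\<gamma> * (1 + 9 * C / 10))" by (simp add: algebra_simps)
  finally have "\<gamma> * (8 + 3 * C) \<le> 10" using small by linarith
  hence "C * (\<gamma> * (8 + 3 * C)) \<le> C * 10" using C_gt_1 by (intro mult_left_mono) auto
  hence "(1 + 3 * C / 4) * (1 + \<kappa>) \<le> 1 + C - \<kappa>" by (simp add: \<kappa>_def algebra_simps)
  hence "(1 + \<kappa>) * ((1 + 3 * C / 4) * d) \<le> (1 + C - \<kappa>) * d"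
    by (simp add: d_def mult_right_mono mult_ac)
  with t have "(1 + \<kappa>) * ((1 + 3 * C / 4) * d) < (1 + \<kappa>) * t" by linarith
  thus ?thesis using \<kappa>_pos by (simp add: t_def d_def)
qed

lemma not_stop_first_order_gain:
  assumes P: "is_fdist P Zsupp" and ns: "\<not> fw_test LinOpt LinEst C \<gamma> P"
  defines "z \<equiv> fw_zt LinOpt LinEst \<gamma> P"
  shows "3 * C / 4 * real CARD('n) < trace ((W z - expW W P) ** matrix_inv (design P))"
proof -
  have "trace ((W z - expW W P) ** matrix_inv (design P))
      = trace (matrix_inv (design P) ** W z) - trace (matrix_inv (design P) ** expW W P)"
    by (simp add: trace_mul_sym[of _ "matrix_inv (design P)"] matrix_mult_diff_left trace_sub)
  moreover have "trace (matrix_inv (design P) ** expW W P) \<le> real CARD('n)"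
    by (rule trace_shifted_inverse_mult_le[OF psd_expW_W[OF P] \<gamma>_pos])
  ultimately show ?thesis using not_stop_trace_lower[OF P ns] by (simp add: z_def algebra_simps)
qed

text \<open>With step size \<open>\<mu> = C\<gamma>\<^sup>2d/8\<close>, the first-order gain \<open>\<mu> \<cdot> 3Cd/4\<close> beats the second-order
  loss \<open>\<mu>\<^sup>2 \<cdot> 2/\<gamma>\<^sup>2\<close> by exactly \<open>C\<^sup>2\<gamma>\<^sup>2d\<^sup>2/16\<close>.\<close>

lemma not_stop_potential_gain:
  assumes P: "is_fdist P Zsupp" and ns: "\<not> fw_test LinOpt LinEst C \<gamma> P"
  defines "\<mu> \<equiv> C * \<gamma>\<^sup>2 * real CARD('n) / 8"
  defines "P' \<equiv> (\<lambda>y. (1 - \<mu>) * P y + \<mu> * delta (fw_zt LinOpt LinEst \<gamma> P) y)"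
  shows "is_fdist P' Zsupp"
    "potential P + C\<^sup>2 * \<gamma>\<^sup>2 * (real CARD('n))\<^sup>2 / 16 < potential P'"
proof -
  define z where "z = fw_zt LinOpt LinEst \<gamma> P"
  define d where "d = real CARD('n)"
  have \<mu>: "0 < \<mu>" "\<mu> \<le> 1/2"
    using not_stop_step_size_le[OF P ns] C_gt_1 \<gamma>_pos by (simp_all add: \<mu>_def)
  show "is_fdist P' Zsupp"
    unfolding P'_def using \<mu> by (intro is_fdist_mix[OF P fw_zt_in_Zsupp]) auto
  note E = psd_expW_W[OF P] norm_expW_W_le[OF P]
  note A = psd_shift[OF E(1), of \<gamma>]
  note Ai = shifted_psd_inverse(2,3)[OF E(1) \<gamma>_pos]
  define g1 where "g1 = trace ((W z - expW W P) ** matrix_inv (design P))"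
  define h where "h = trace ((W z - expW W P) ** matrix_inv (design P) ** (W z - expW W P)
    ** matrix_inv (design P))"
  have eq: "design P + \<mu> *\<^sub>R (W z - expW W P) = design P'"
    using expW_mix[where a = "1 - \<mu>" and b = \<mu> and y = z and W = W] P
    unfolding P'_def z_def is_fdist_def by (simp add: algebra_simps)
  have "ln (det (design P)) + \<mu> * g1 - \<mu>\<^sup>2 * h \<le> potential P'"
    unfolding potential_def g1_def h_def eq[symmetric]
    by (rule ln_det_add_ge[OF A(1) _ \<gamma>_pos A(2) _ less_imp_le[OF \<mu>(1)] \<mu>(2)])
      (use W_psd[of z] E \<gamma>_pos in \<open>auto simp: psd_def transpose_diff quad_form_add
        quad_form_diff quad_form_scaled_id intro: add_nonneg_nonneg\<close>)
  moreover have "\<mu> * (3 * C / 4 * d) < \<mu> * g1"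
    using not_stop_first_order_gain[OF P ns] \<mu>(1) by (simp add: z_def g1_def d_def)
  moreover have "\<mu>\<^sup>2 * h \<le> \<mu>\<^sup>2 * (2 / \<gamma>\<^sup>2)"
    unfolding h_def by (intro mult_left_mono trace_sq_inv_diff_le[OF Ai \<gamma>_pos W_psd W_norm E]) auto
  moreover have "\<mu> * (3 * C / 4 * d) = 3 * (C\<^sup>2 * \<gamma>\<^sup>2 * d\<^sup>2 / 16) / 2"
    by (simp add: \<mu>_def d_def power2_eq_square)
  moreover have "\<mu>\<^sup>2 * (2 / \<gamma>\<^sup>2) = (C\<^sup>2 * \<gamma>\<^sup>2 * d\<^sup>2 / 16) / 2"
    using \<gamma>_pos by (simp add: \<mu>_def d_def power2_eq_square)
  ultimately show "potential P + C\<^sup>2 * \<gamma>\<^sup>2 * (real CARD('n))\<^sup>2 / 16 < potential P'"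
    unfolding potential_def d_def by linarith
qed

text \<open>At termination the test holds at the chosen point; approximate optimality of \<open>LinOpt\<close>
  against \<open>M\<^sup>-\<^sup>1/\<parallel>M\<^sup>-\<^sup>1\<parallel>\<^sub>F\<close> transfers it to every reference point, at the price
  \<open>\<epsilon>\<^sub>L\<^sub>i\<^sub>n\<^sub>O\<^sub>p\<^sub>t \<parallel>M\<^sup>-\<^sup>1\<parallel>\<^sub>F \<le> Cd/5\<close>.\<close>

lemma stop_trace_bound_estimated:
  assumes P: "is_fdist P Zsupp" and st: "fw_test LinOpt LinEst C \<gamma> P" and zR: "z \<in> Zref"
  shows "trace (matrix_inv (fw_M LinEst \<gamma> P) ** W z) \<le> (1 + 6 * C / 5 + \<kappa>) * real CARD('n)"
proof -
  define d where "d = real CARD('n)"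
  define Mi where "Mi = matrix_inv (fw_M LinEst \<gamma> P)"
  define zt where "zt = fw_zt LinOpt LinEst \<gamma> P"
  have zt: "zt \<in> Zsupp" by (simp add: zt_def fw_zt_in_Zsupp)
  note L = psd_LinEst[OF P]
  note Mi = shifted_psd_inverse[OF L \<gamma>_pos, folded fw_M_def, folded Mi_def]
  have "trace (Mi ** W z) \<le> trace (Mi ** W zt) + (C * \<gamma> / 5) * norm Mi"
    using LinOpt_approx[OF Mi(2) matrix_inv_nonzero[OF Mi(1), folded Mi_def] zR]
    by (simp add: zt_def fw_zt_def Mi_def Let_def)
  also have "trace (Mi ** W zt) \<le> trace (Mi ** LinEst (delta zt)) + \<kappa> * \<gamma> * trace Mi"
  proof -
    have "trace (W zt ** Mi) \<le> trace ((LinEst (delta zt) + (\<kappa> * \<gamma>) *\<^sub>R mat 1) ** Mi)"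
    proof (rule trace_mult_mono[OF _ Mi(2)])
      fix x show "x \<bullet> (W zt *v x) \<le> x \<bullet> ((LinEst (delta zt) + (\<kappa> * \<gamma>) *\<^sub>R mat 1) *v x)"
        using LinEst_delta(2)[OF zt, of x] by (simp add: quad_form_add quad_form_scaled_id abs_le_iff)
    qed
    thus ?thesis by (simp add: trace_mult_add_scaled_id trace_mul_sym[of Mi])
  qed
  also have "trace (Mi ** LinEst (delta zt)) \<le> (1 + C) * d"
    using st by (simp add: fw_test_def Mi_def zt_def d_def)
  also have "\<kappa> * \<gamma> * trace Mi \<le> \<kappa> * d"
    using trace_le_card[OF Mi(3)] \<kappa>_pos \<gamma>_pos mult_left_mono[of _ _ "\<kappa> * \<gamma>"]
    by (simp add: d_def field_simps)
  also have "(C * \<gamma> / 5) * norm Mi \<le> C * d / 5"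
  proof -
    have "(C * \<gamma> / 5) * norm Mi \<le> (C * \<gamma> / 5) * (sqrt d / \<gamma>)"
      using norm_shifted_inverse_le[OF L \<gamma>_pos] C_gt_1 \<gamma>_pos
      by (intro mult_left_mono) (auto simp: Mi_def fw_M_def d_def)
    also have "\<dots> \<le> C * d / 5"
      using C_gt_1 \<gamma>_pos real_sqrt_le_self[of d] by (simp add: d_def divide_right_mono)
    finally show ?thesis .
  qed
  finally show ?thesis by (simp add: Mi_def d_def algebra_simps)
qed

lemma stop_trace_bound:
  assumes P: "is_fdist P Zsupp" and st: "fw_test LinOpt LinEst C \<gamma> P" and zR: "z \<in> Zref"
  shows "trace (matrix_inv (design P) ** W z) \<le> (1 + 3 * C / 2) * real CARD('n)"
proof (cases "1 \<le> \<gamma> * sqrt (real CARD('n)) * (1 + 3 * C / 2)")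
  case True
  have "trace (matrix_inv (design P) ** W z) \<le> sqrt (real CARD('n)) / \<gamma>"
    by (rule trace_shifted_inverse_mult_le_sqrt[OF psd_expW_W[OF P] \<gamma>_pos W_psd W_norm])
  also have "\<dots> \<le> (1 + 3 * C / 2) * real CARD('n)"
  proof -
    have "sqrt (real CARD('n)) * 1 \<le> sqrt (real CARD('n)) * (\<gamma> * sqrt (real CARD('n)) * (1 + 3 * C / 2))"
      using True by (intro mult_left_mono) auto
    also have "\<dots> = \<gamma> * ((1 + 3 * C / 2) * real CARD('n))" by (simp add: algebra_simps)
    finally show ?thesis using \<gamma>_pos by (simp add: divide_le_eq mult.commute)
  qed
  finally show ?thesis .
next
  case False
  have "\<gamma> * (1 + 3 * C / 2) \<le> \<gamma> * sqrt (real CARD('n)) * (1 + 3 * C / 2)"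
    using \<gamma>_pos C_gt_1 by (intro mult_right_mono) auto
  hence "C * \<gamma> \<le> 2/3" using False \<gamma>_pos by (simp add: algebra_simps)
  hence \<kappa>: "\<kappa> \<le> 1/15" by (simp add: \<kappa>_def)
  have "trace (matrix_inv (design P) ** W z) \<le> (1 + \<kappa>) * trace (matrix_inv (fw_M LinEst \<gamma> P) ** W z)"
    by (rule trace_mult_le_scaled[OF inverse_design_le_scaled(1)[OF P] W_psd])
  also have "\<dots> \<le> (1 + \<kappa>) * ((1 + 6 * C / 5 + \<kappa>) * real CARD('n))"
    using stop_trace_bound_estimated[OF P st zR] \<kappa>_pos by (intro mult_left_mono) auto
  also have "\<dots> \<le> (1 + 3 * C / 2) * real CARD('n)"
  proof -
    have "(1 + \<kappa>) * (1 + 6 * C / 5 + \<kappa>) \<le> (1 + 1/15) * (1 + 6 * C / 5 + 1/15)"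
      using \<kappa> \<kappa>_pos C_gt_1 by (intro mult_mono) auto
    also have "\<dots> \<le> 1 + 3 * C / 2" using C_gt_1 by simp
    finally show ?thesis by (simp add: mult_right_mono flip: mult.assoc)
  qed
  finally show ?thesis .
qed

abbreviation P_iter :: "nat \<Rightarrow> 'z \<Rightarrow> real" where
  "P_iter t \<equiv> fw_P LinOpt LinEst C \<gamma> t"

lemma P_iter_Suc:
  assumes "1 \<le> k"
  shows "P_iter (Suc k) = (\<lambda>y. (1 - C * \<gamma>\<^sup>2 * real CARD('n) / 8) * P_iter k y
            + (C * \<gamma>\<^sup>2 * real CARD('n) / 8) * delta (fw_zt LinOpt LinEst \<gamma> (P_iter k)) y)"
  using assms by (cases k) (simp_all add: Let_def)

lemma P_iter_step:
  assumes k: "1 \<le> k" and P: "is_fdist (P_iter k) Zsupp" and ns: "\<not> fw_stop LinOpt LinEst C \<gamma> k"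
  shows "is_fdist (P_iter (Suc k)) Zsupp"
    "card (fsupp (P_iter (Suc k))) \<le> Suc (card (fsupp (P_iter k)))"
    "potential (P_iter k) + C\<^sup>2 * \<gamma>\<^sup>2 * (real CARD('n))\<^sup>2 / 16 < potential (P_iter (Suc k))"
proof -
  have ns': "\<not> fw_test LinOpt LinEst C \<gamma> (P_iter k)" using ns by (simp add: fw_stop_eq_fw_test)
  show "is_fdist (P_iter (Suc k)) Zsupp"
    "potential (P_iter k) + C\<^sup>2 * \<gamma>\<^sup>2 * (real CARD('n))\<^sup>2 / 16 < potential (P_iter (Suc k))"
    unfolding P_iter_Suc[OF k] using not_stop_potential_gain[OF P ns'] by simp_all
  have fin: "finite (fsupp (P_iter k))" using P by (simp add: is_fdist_def)
  hence "card (fsupp (P_iter (Suc k))) \<le> card (insert (fw_zt LinOpt LinEst \<gamma> (P_iter k)) (fsupp (P_iter k)))"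
    unfolding P_iter_Suc[OF k] by (intro card_mono fsupp_mix_subset) auto
  also have "\<dots> \<le> Suc (card (fsupp (P_iter k)))" by (simp add: card_insert_if fin)
  finally show "card (fsupp (P_iter (Suc k))) \<le> Suc (card (fsupp (P_iter k)))" .
qed

lemma P_iter_invariant:
  assumes "1 \<le> k" and "\<And>s. 1 \<le> s \<Longrightarrow> s < k \<Longrightarrow> \<not> fw_stop LinOpt LinEst C \<gamma> s"
  shows "is_fdist (P_iter k) Zsupp \<and> card (fsupp (P_iter k)) \<le> k
     \<and> potential (P_iter 1) + (real k - 1) * (C\<^sup>2 * \<gamma>\<^sup>2 * (real CARD('n))\<^sup>2 / 16) \<le> potential (P_iter k)"
  using assms
proof (induction k rule: nat_induct_at_least)
  case base
  have "P_iter 1 = delta (LinOpt (mat 1))" by (simp add: numeral_eq_Suc)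
  thus ?case by (simp add: is_fdist_delta LinOpt_in_Zsupp fsupp_delta)
next
  case (Suc k)
  hence IH: "is_fdist (P_iter k) Zsupp" "card (fsupp (P_iter k)) \<le> k"
    "potential (P_iter 1) + (real k - 1) * (C\<^sup>2 * \<gamma>\<^sup>2 * (real CARD('n))\<^sup>2 / 16) \<le> potential (P_iter k)"
    by simp_all
  note step = P_iter_step[OF Suc.hyps IH(1) Suc.prems[OF Suc.hyps lessI]]
  define G where "G = C\<^sup>2 * \<gamma>\<^sup>2 * (real CARD('n))\<^sup>2 / 16"
  have "(real (Suc k) - 1) * G = (real k - 1) * G + G" by (simp add: algebra_simps)
  hence "potential (P_iter 1) + (real (Suc k) - 1) * G \<le> potential (P_iter (Suc k))"
    using IH(3) step(3) unfolding G_def[symmetric] by linarith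
  thus ?case using IH(1,2) step(1,2) unfolding G_def by simp
qed

lemma potential_bounds:
  assumes "is_fdist P Zsupp"
  shows "real CARD('n) * ln \<gamma> \<le> potential P"
    "potential P \<le> real CARD('n) * ln \<gamma> + real CARD('n) * ln (1 + 1/\<gamma>)"
  using ln_det_shift_bounds[OF psd_expW_W[OF assms] norm_expW_W_le[OF assms] \<gamma>_pos]
  by (simp_all add: potential_def)

text \<open>If no test succeeded among the first \<open>N \<ge> X\<close> iterations, the potential would have
  risen by more than \<open>N\<close> times the gain, i.e. by more than its whole range \<open>d ln (1 + 1/\<gamma>)\<close>.\<close>

lemma fw_stops_within:
  defines "X \<equiv> 16 / (\<gamma>\<^sup>2 * C\<^sup>2 * real CARD('n)) * ln (1 + 1 / \<gamma>)"
  shows "\<exists>t. 1 \<le> t \<and> t \<le> nat \<lceil>X\<rceil> \<and> fw_stop LinOpt LinEst C \<gamma> t"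
proof (rule ccontr)
  define N where "N = nat \<lceil>X\<rceil>"
  define G where "G = C\<^sup>2 * \<gamma>\<^sup>2 * (real CARD('n))\<^sup>2 / 16"
  assume "\<not> ?thesis"
  hence ns: "\<And>s. 1 \<le> s \<Longrightarrow> s \<le> N \<Longrightarrow> \<not> fw_stop LinOpt LinEst C \<gamma> s" by (auto simp: N_def)
  have X: "0 < X" unfolding X_def using \<gamma>_pos C_gt_1
    by (intro mult_pos_pos divide_pos_pos ln_gt_zero) auto
  hence "1 \<le> \<lceil>X\<rceil>" by (simp add: one_le_ceiling)
  hence N: "1 \<le> N" "X \<le> real N" unfolding N_def using X by linarith+
  have inv: "is_fdist (P_iter N) Zsupp" "potential (P_iter 1) + (real N - 1) * G \<le> potential (P_iter N)"
    using P_iter_invariant[OF N(1)] ns by (auto simp: G_def)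
  have "potential (P_iter N) + G < potential (P_iter (Suc N))"
    using P_iter_step(3)[OF N(1) inv(1) ns[OF N(1) order_refl]] by (simp add: G_def)
  moreover have "potential (P_iter (Suc N)) \<le> real CARD('n) * ln \<gamma> + real CARD('n) * ln (1 + 1/\<gamma>)"
    using potential_bounds(2) P_iter_step(1)[OF N(1) inv(1) ns[OF N(1) order_refl]] by blast
  moreover have "real CARD('n) * ln \<gamma> \<le> potential (P_iter 1)"
    using potential_bounds(1) P_iter_invariant[of 1] by simp
  moreover have "X * G = real CARD('n) * ln (1 + 1/\<gamma>)"
    using \<gamma>_pos C_gt_1 by (simp add: X_def G_def power2_eq_square field_simps)
  moreover have "X * G \<le> real N * G" using N by (intro mult_right_mono) (auto simp: G_def)
  ultimately show False using inv(2) by (simp add: algebra_simps)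
qed

lemma fw_optdesign_guarantee:
  "\<exists>t::nat. 1 \<le> t
     \<and> real t \<le> real_of_int \<lceil>16 / (\<gamma>\<^sup>2 * C\<^sup>2 * real CARD('n)) * ln (1 + 1 / \<gamma>)\<rceil>
     \<and> fw_stop LinOpt LinEst C \<gamma> t
     \<and> (\<forall>s. 1 \<le> s \<and> s < t \<longrightarrow> \<not> fw_stop LinOpt LinEst C \<gamma> s)
     \<and> is_fdist (P_iter t) Zsupp
     \<and> card (fsupp (P_iter t)) \<le> t
     \<and> (\<forall>z\<in>Zref. trace (matrix_inv (design (P_iter t)) ** W z) \<le> (1 + 3 * C / 2) * real CARD('n))"
proof -
  define X where "X = 16 / (\<gamma>\<^sup>2 * C\<^sup>2 * real CARD('n)) * ln (1 + 1 / \<gamma>)"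
  define t where "t = (LEAST t. 1 \<le> t \<and> fw_stop LinOpt LinEst C \<gamma> t)"
  obtain t0 where t0: "1 \<le> t0" "t0 \<le> nat \<lceil>X\<rceil>" "fw_stop LinOpt LinEst C \<gamma> t0"
    using fw_stops_within unfolding X_def by blast
  have t: "1 \<le> t \<and> fw_stop LinOpt LinEst C \<gamma> t"
    unfolding t_def by (rule LeastI[of _ t0]) (use t0 in auto)
  have "t \<le> t0" unfolding t_def by (rule Least_le) (use t0 in auto)
  have first: "\<forall>s. 1 \<le> s \<and> s < t \<longrightarrow> \<not> fw_stop LinOpt LinEst C \<gamma> s"
    using not_less_Least[where P = "\<lambda>t. 1 \<le> t \<and> fw_stop LinOpt LinEst C \<gamma> t"]
    unfolding t_def by blast
  have inv: "is_fdist (P_iter t) Zsupp \<and> card (fsupp (P_iter t)) \<le> t"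
    using P_iter_invariant[of t] t first by blast
  have "int t \<le> \<lceil>X\<rceil>" using \<open>t \<le> t0\<close> t0 by linarith
  hence "real t \<le> real_of_int \<lceil>X\<rceil>" by (metis of_int_le_iff of_int_of_nat_eq)
  moreover have "\<forall>z\<in>Zref. trace (matrix_inv (design (P_iter t)) ** W z) \<le> (1 + 3 * C / 2) * real CARD('n)"
    using stop_trace_bound inv t by (simp add: fw_stop_eq_fw_test)
  ultimately show ?thesis using t first inv unfolding X_def by blast
qed

end

theorem mainTheorem2:
  fixes W :: "'z \<Rightarrow> real^'n^'n"
    and LinOpt :: "real^'n^'n \<Rightarrow> 'z"
    and LinEst :: "('z \<Rightarrow> real) \<Rightarrow> real^'n^'n"
    and Zref Zsupp :: "'z set"
    and C \<gamma> :: real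
  assumes W_psd: "\<forall>z. psd (W z)"
    and W_norm: "\<forall>z. norm (W z) \<le> 1"
    and C: "1 < C" "C \<le> 2"
    and \<gamma>: "0 < \<gamma>" "\<gamma> < 1"
    and \<gamma>C: "\<gamma> * C < 5 / 2"
    and approx: "approx_assumption W LinOpt LinEst Zref Zsupp (C * \<gamma> / 5) (C * \<gamma>^2 / 10)"
  shows "\<exists>t::nat. 1 \<le> t
     \<and> real t \<le> real_of_int \<lceil>16 / (\<gamma>^2 * C^2 * real CARD('n)) * ln (1 + 1 / \<gamma>)\<rceil>
     \<and> fw_stop LinOpt LinEst C \<gamma> t
     \<and> (\<forall>s. 1 \<le> s \<and> s < t \<longrightarrow> \<not> fw_stop LinOpt LinEst C \<gamma> s)
     \<and> is_fdist (fw_P LinOpt LinEst C \<gamma> t) Zsupp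
     \<and> card (fsupp (fw_P LinOpt LinEst C \<gamma> t)) \<le> t
     \<and> (\<forall>z\<in>Zref. trace (matrix_inv (\<gamma> *\<^sub>R mat 1 + expW W (fw_P LinOpt LinEst C \<gamma> t)) ** W z)
           \<le> (1 + 3 * C / 2) * real CARD('n))"
proof -
  interpret fw_optdesign W LinOpt LinEst Zref Zsupp C \<gamma>
    using W_psd W_norm C \<gamma> approx by unfold_locales auto
  show ?thesis by (rule fw_optdesign_guarantee)
qed

end
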